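(* Let $k\ge0$, $\hat y\in Y$, and $\bar\lambda_k=\lambda+\frac{2\tau_k\mathsf D^k}{k!}\mathbb 1\{k\ge1\}$. Assume: (i) $\nabla_x f$ exists and $\|\nabla_x f(x',y')-\nabla_x f(x,y)\|\le\lambda\|x'-x\|+\mu\|y'-y\|$ for all $x,x'\in X$, $y,y'\in Y$ (possibly $\mu=\infty$); (ii) $\nabla^k_{y\cdots y}f$ exists and $\|\nabla^k_{y\cdots y}f(x',y')-\nabla^k_{y\cdots y}f(x,y)\|\le\rho_k\|y'-y\|+\sigma_k\|x'-x\|$ for all $x,x',y,y'$, and $\nabla^k_{y\cdots y}f(\cdot,y)$ is absolutely continuous for every $y$; (iii) if $k\ge1$: $\nabla^{k+1}_{xy\cdots y}f$ exists with $\|\nabla^{k+1}_{xy\cdots y}f(x',y)-\nabla^{k+1}_{xy\cdots y}f(x,y)\|\le\tau_k\|x'-x\|$, the set $\{(x,y):x\in X,y\in Y'_x\}$ is Lebesgue measurable where $Y'_x$ is the set of $y$ at which $\nabla^{k+2}_{xxy\cdots y}f(x,y)$ does not exist, and $\nabla^k_{y\cdots y}f(x,\cdot)$ is continuous for every $x$. Then for all $x\in X$, $$\|\nabla\hat\varphi_{2\bar\lambda_k}(x)-\nabla\varphi_{2\bar\lambda_k}(x)\|\le\sqrt{\frac{8\bar\lambda_k\rho_k\mathsf D^{k+1}}{(k+1)!}}.$$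
   Context: Let $E_x,E_y$ be finite-dimensional Euclidean spaces with Euclidean norms; for tensors $\|\cdot\|$ is the induced operator norm. Let $X\subseteq E_x$, $Y\subseteq E_y$ be convex with nonempty interior, $Y$ compact, $\mathsf D\ge\mathrm{diam}(Y)$, $f:X\times Y\to\mathbb R$. $\nabla^j_{y\cdots y}f$ denotes the tensor of $j$-th order partial derivatives in $y$, and $\nabla^{k+1}_{xy\cdots y}f$, $\nabla^{k+2}_{xxy\cdots y}f$ those with additionally one, resp. two, derivatives in $x$. For $\hat y\in Y$, $\hat f_k(x,y)=\sum_{j=0}^k\frac1{j!}\nabla^j_{y\cdots y}f(x,\hat y)[(y-\hat y)^j]$ ($T[v^j]=T[v,\dots,v]$). Primal functions: $\varphi(x)=\max_{y\in Y}f(x,y)$, $\hat\varphi(x)=\max_{y\in Y}\hat f_k(x,y)$. For a function $\phi:X\to\mathbb R$ that is $c$-weakly convex ($\phi+\frac c2\|\cdot\|^2$ convex) with $c<\bar\lambda$, the Moreau envelope is $\phi_{\bar\lambda}(x)=\min_{u\in X}\{\phi(u)+\frac{\bar\lambda}2\|u-x\|^2\}$, which is differentiable. *)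

theory Defs
  imports "HOL-Analysis.Analysis" "HOL-Library.Extended_Real"
begin

text \<open>Tensors of order j on E_y are represented as functions on lists of
  vectors (only lists of length j matter); mixed tensors with one extra
  x-direction take an additional first argument u.\<close>

primrec ydiff :: "('a \<Rightarrow> 'b::euclidean_space \<Rightarrow> real) \<Rightarrow> 'b set \<Rightarrow> nat \<Rightarrow> 'a \<Rightarrow> 'b \<Rightarrow> 'b list \<Rightarrow> real"
  where
    "ydiff f Y 0 x y vs = f x y"
  | "ydiff f Y (Suc j) x y vs =
       frechet_derivative (\<lambda>y'. ydiff f Y j x y' (tl vs)) (at y within Y) (hd vs)"

definition ydiff_exists :: "('a \<Rightarrow> 'b::euclidean_space \<Rightarrow> real) \<Rightarrow> 'a set \<Rightarrow> 'b set \<Rightarrow> nat \<Rightarrow> bool"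
  where "ydiff_exists f X Y k \<longleftrightarrow>
    (\<forall>j<k. \<forall>x\<in>X. \<forall>y\<in>Y. \<forall>vs. length vs = j \<longrightarrow>
        (\<lambda>y'. ydiff f Y j x y' vs) differentiable (at y within Y))"

text \<open>Mixed derivative nabla^{j+1}_{x y..y} f: x-derivative (within X) of the
  j-th y-derivative tensor; applied to x-direction u and y-directions vs.
  For j = 0 this is the partial gradient nabla_x f (as a linear functional).\<close>
definition xydiff :: "('a::euclidean_space \<Rightarrow> 'b::euclidean_space \<Rightarrow> real) \<Rightarrow> 'a set \<Rightarrow> 'b set \<Rightarrow> nat
    \<Rightarrow> 'a \<Rightarrow> 'b \<Rightarrow> 'a \<Rightarrow> 'b list \<Rightarrow> real"
  where "xydiff f X Y j x y u vs =
    frechet_derivative (\<lambda>x'. ydiff f Y j x' y vs) (at x within X) u"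

definition xydiff_exists :: "('a::euclidean_space \<Rightarrow> 'b::euclidean_space \<Rightarrow> real) \<Rightarrow> 'a set \<Rightarrow> 'b set \<Rightarrow> nat \<Rightarrow> bool"
  where "xydiff_exists f X Y j \<longleftrightarrow>
    (\<forall>x\<in>X. \<forall>y\<in>Y. \<forall>vs. length vs = j \<longrightarrow>
        (\<lambda>x'. ydiff f Y j x' y vs) differentiable (at x within X))"

text \<open>Y'_x: points y at which nabla^{k+2}_{xx y..y} f(x,y) does not exist, i.e. the
  tensor-valued map x' \<mapsto> nabla^{k+1}_{x y..y} f(x',y) is not differentiable at x.\<close>
definition Ybad :: "('a::euclidean_space \<Rightarrow> 'b::euclidean_space \<Rightarrow> real) \<Rightarrow> 'a set \<Rightarrow> 'b set \<Rightarrow> nat \<Rightarrow> 'a \<Rightarrow> 'b set"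
  where "Ybad f X Y k x = {y\<in>Y. \<not> (\<forall>u vs. length vs = k \<longrightarrow>
        (\<lambda>x'. xydiff f X Y k x' y u vs) differentiable (at x within X))}"

definition tnorm :: "nat \<Rightarrow> ('b::real_normed_vector list \<Rightarrow> real) \<Rightarrow> real"
  where "tnorm j T = Sup {\<bar>T vs\<bar> | vs. length vs = j \<and> (\<forall>v\<in>set vs. norm v \<le> 1)}"

definition xynorm :: "nat \<Rightarrow> ('a::real_normed_vector \<Rightarrow> 'b::real_normed_vector list \<Rightarrow> real) \<Rightarrow> real"
  where "xynorm j T = Sup {\<bar>T u vs\<bar> | u vs. norm u \<le> 1 \<and> length vs = j \<and> (\<forall>v\<in>set vs. norm v \<le> 1)}"

text \<open>Absolute continuity of a tensor-valued map on X (read along line segments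
  of X, which is convex).\<close>
definition abs_cont_tensor :: "nat \<Rightarrow> 'a::real_normed_vector set \<Rightarrow> ('a \<Rightarrow> 'b::real_normed_vector list \<Rightarrow> real) \<Rightarrow> bool"
  where "abs_cont_tensor j X g \<longleftrightarrow>
    (\<forall>a\<in>X. \<forall>b\<in>X. \<forall>\<epsilon>>0. \<exists>\<delta>>0. \<forall>(n::nat) (s::nat \<Rightarrow> real) t.
       (\<forall>i<n. 0 \<le> s i \<and> s i \<le> t i \<and> t i \<le> 1) \<and>
       (\<forall>i<n. \<forall>i'<n. i \<noteq> i' \<longrightarrow> t i \<le> s i' \<or> t i' \<le> s i) \<and>
       (\<Sum>i<n. t i - s i) < \<delta> \<longrightarrow>
       (\<Sum>i<n. tnorm j (\<lambda>vs. g (a + t i *\<^sub>R (b - a)) vs - g (a + s i *\<^sub>R (b - a)) vs)) < \<epsilon>)"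

definition taylor_model :: "('a \<Rightarrow> 'b::euclidean_space \<Rightarrow> real) \<Rightarrow> 'b set \<Rightarrow> nat \<Rightarrow> 'b \<Rightarrow> 'a \<Rightarrow> 'b \<Rightarrow> real"
  where "taylor_model f Y k yh x y =
    (\<Sum>j\<le>k. ydiff f Y j x yh (replicate j (y - yh)) / fact j)"

definition primal :: "('a \<Rightarrow> 'b \<Rightarrow> real) \<Rightarrow> 'b set \<Rightarrow> 'a \<Rightarrow> real"
  where "primal g Y x = (SUP y\<in>Y. g x y)"

definition moreau :: "('a::real_normed_vector \<Rightarrow> real) \<Rightarrow> 'a set \<Rightarrow> real \<Rightarrow> 'a \<Rightarrow> real"
  where "moreau \<phi> X lam x = (INF u\<in>X. \<phi> u + lam / 2 * (norm (u - x))\<^sup>2)"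

end

theory Submission
  imports Defs
begin

text \<open>Write \<open>\<lambda>\<^sub>k\<close> for \<open>lam + 2 \<tau> D\<^sup>k / k!\<close> (for \<open>k \<ge> 1\<close>) and \<open>\<epsilon> = \<rho> D\<^sup>k\<^sup>+\<^sup>1 / (k+1)!\<close>.
  Both coupling functions are \<open>\<lambda>\<^sub>k\<close>-weakly convex in \<open>x\<close>: \<open>f(\<cdot>, y)\<close> because its \<open>x\<close>-gradient is
  \<open>lam\<close>-Lipschitz, and the Taylor model because Taylor's theorem along the segment from \<open>yh\<close> to \<open>y\<close>,
  applied to convexity gaps in \<open>x\<close>, shows that its convexity gap differs from that of \<open>f\<close> by at most
  \<open>2 \<tau> D\<^sup>k / k!\<close> times the quadratic term, the \<open>k\<close>-th \<open>y\<close>-derivative having a \<open>\<tau>\<close>-Lipschitz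
  \<open>x\<close>-gradient. Suprema over \<open>y\<close> preserve weak convexity, and by the Taylor remainder bound the
  two primal functions differ by at most \<open>\<epsilon>\<close>.

  For a \<open>c\<close>-weakly convex \<open>\<psi>\<close> the proximal objective \<open>\<psi> u + c \<parallel>u - x\<parallel>\<^sup>2\<close> is strongly convex, so
  the envelope with parameter \<open>2c\<close> has gradient \<open>2c (x - p)\<close> at \<open>x\<close>, with \<open>p\<close> the proximal point (a limit of
  minimizing sequences, as \<open>X\<close> need not be closed). Strong convexity of the two objectives yields
  \<open>c \<parallel>p - p'\<parallel>\<^sup>2 \<le> 2\<epsilon>\<close> for \<open>\<epsilon>\<close>-close functions, hence \<open>\<parallel>2c (p - p')\<parallel> \<le> \<surd>(8 c \<epsilon>)\<close>.

  All derivative estimates are pointwise mean value arguments.\<close>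

section \<open>Uniqueness of derivatives within convex sets\<close>

lemma has_derivative_eq_on_chords:
  fixes f :: "'a::real_normed_vector \<Rightarrow> 'b::real_normed_vector"
  assumes S: "convex S" "x \<in> S" "z \<in> S"
    and d1: "(f has_derivative D1) (at x within S)" and d2: "(f has_derivative D2) (at x within S)"
  shows "D1 (z - x) = D2 (z - x)"
proof -
  define g where "g = (\<lambda>t::real. x + t *\<^sub>R (z - x))"
  have gd: "(g has_derivative (\<lambda>t. t *\<^sub>R (z - x))) (at 0 within {0..1})"
    unfolding g_def by (auto intro!: derivative_eq_intros)
  have gS: "g ` {0..1} \<subseteq> S"
    using convexD_alt[OF S] by (auto simp: g_def algebra_simps)
  have "(f \<circ> g has_derivative D1 \<circ> (\<lambda>t. t *\<^sub>R (z - x))) (at 0 within {0..1})"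
    by (rule diff_chain_within[OF gd]) (use has_derivative_subset[OF d1 gS] in \<open>simp add: g_def\<close>)
  moreover have "(f \<circ> g has_derivative D2 \<circ> (\<lambda>t. t *\<^sub>R (z - x))) (at 0 within {0..1})"
    by (rule diff_chain_within[OF gd]) (use has_derivative_subset[OF d2 gS] in \<open>simp add: g_def\<close>)
  ultimately have "D1 \<circ> (\<lambda>t. t *\<^sub>R (z - x)) = D2 \<circ> (\<lambda>t. t *\<^sub>R (z - x))"
    by (intro frechet_derivative_unique_within_closed_interval[of 0 1 0 "f \<circ> g"])
       (auto simp: cbox_interval)
  then show ?thesis by (metis comp_apply scaleR_one)
qed

lemma linear_eq_if_eq_on_translate:
  fixes D1 D2 :: "'a::real_normed_vector \<Rightarrow> 'b::real_vector"
  assumes lin: "linear D1" "linear D2" and S: "interior S \<noteq> {}"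
    and eq: "\<And>z. z \<in> S \<Longrightarrow> D1 (z - x) = D2 (z - x)"
  shows "D1 = D2"
proof
  fix w :: 'a
  obtain z0 r where r: "r > 0" "ball z0 r \<subseteq> S"
    using S mem_interior by blast
  define c where "c = r / (2 * norm w + 1)"
  have "norm w / (2 * norm w + 1) < 1"
    by (smt (verit) norm_ge_zero divide_less_eq_1_pos)
  then have "norm (c *\<^sub>R w) < r"
    using r by (simp add: c_def mult_less_cancel_left1 times_divide_eq_right[symmetric] del: times_divide_eq_right)
  then have in_S: "z0 \<in> S" "z0 + c *\<^sub>R w \<in> S"
    using r by (auto simp: dist_norm intro!: subsetD[OF r(2)])
  define D where "D = (\<lambda>v. D1 v - D2 v)"
  have lin_D: "linear D"
    unfolding D_def using lin by (rule linear_compose_sub)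
  have "D (z0 + c *\<^sub>R w - x) = D ((z0 - x) + c *\<^sub>R w)"
    by (simp add: algebra_simps)
  also have "\<dots> = D (z0 - x) + c *\<^sub>R D w"
    by (simp add: linear_add[OF lin_D] linear_scale[OF lin_D])
  finally have "D (z0 + c *\<^sub>R w - x) = D (z0 - x) + c *\<^sub>R D w" .
  moreover have "D (z0 - x) = 0" "D (z0 + c *\<^sub>R w - x) = 0"
    using eq[OF in_S(1)] eq[OF in_S(2)] by (simp_all add: D_def)
  moreover have "c > 0"
    using r by (simp add: c_def add_nonneg_pos)
  ultimately show "D1 w = D2 w" by (simp add: D_def)
qed

lemma has_derivative_unique_convex:
  fixes f :: "'a::real_normed_vector \<Rightarrow> 'b::real_normed_vector"
  assumes S: "convex S" "interior S \<noteq> {}" and x: "x \<in> S"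
    and d1: "(f has_derivative D1) (at x within S)" and d2: "(f has_derivative D2) (at x within S)"
  shows "D1 = D2"
  using d1 d2 has_derivative_eq_on_chords[OF S(1) x _ d1 d2]
  by (intro linear_eq_if_eq_on_translate[OF _ _ S(2)]) (auto dest: has_derivative_linear)

text \<open>The tensors \<open>ydiff\<close> and \<open>xydiff\<close> are defined through \<open>frechet_derivative\<close>, a choice;
  uniqueness is what makes them depend linearly on the differentiated function.\<close>

lemma frechet_derivative_lincomb_convex:
  fixes g g1 g2 :: "'a::euclidean_space \<Rightarrow> real"
  assumes S: "convex S" "interior S \<noteq> {}" and y: "y \<in> S"
    and d1: "g1 differentiable (at y within S)" and d2: "g2 differentiable (at y within S)"
    and d: "g differentiable (at y within S)"
    and eq: "\<And>y'. y' \<in> S \<Longrightarrow> g y' = a * g1 y' + b * g2 y'"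
  shows "frechet_derivative g (at y within S) h =
     a * frechet_derivative g1 (at y within S) h + b * frechet_derivative g2 (at y within S) h"
proof -
  have "((\<lambda>y'. a * g1 y' + b * g2 y') has_derivative
      (\<lambda>h. a * frechet_derivative g1 (at y within S) h + b * frechet_derivative g2 (at y within S) h))
      (at y within S)"
    using d1 d2 by (intro has_derivative_add has_derivative_mult_right) (simp_all add: frechet_derivative_works)
  then have "(g has_derivative
      (\<lambda>h. a * frechet_derivative g1 (at y within S) h + b * frechet_derivative g2 (at y within S) h))
      (at y within S)"
    by (rule has_derivative_transform_within[of _ _ _ _ 1]) (use y eq in auto)
  with d show ?thesis
    by (metis frechet_derivative_works has_derivative_unique_convex[OF S y])
qed

section \<open>Multilinear forms on lists of vectors\<close>

definition multilinear :: "nat \<Rightarrow> ('b::real_vector list \<Rightarrow> real) \<Rightarrow> bool" where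
  "multilinear j T \<longleftrightarrow> (\<forall>i<j. \<forall>vs p q a b. length vs = j \<longrightarrow>
     T (vs[i := a *\<^sub>R p + b *\<^sub>R q]) = a * T (vs[i := p]) + b * T (vs[i := q]))"

lemma multilinear_Cons:
  assumes "multilinear (Suc j) T"
  shows "multilinear j (\<lambda>ws. T (h # ws))"
  unfolding multilinear_def
proof (intro allI impI)
  fix i vs p q a b assume "i < j" and "length (vs::'a list) = j"
  then have "T ((h # vs)[Suc i := a *\<^sub>R p + b *\<^sub>R q]) =
      a * T ((h # vs)[Suc i := p]) + b * T ((h # vs)[Suc i := q])"
    using assms unfolding multilinear_def by (metis Suc_less_eq length_Cons)
  then show "T (h # vs[i := a *\<^sub>R p + b *\<^sub>R q]) = a * T (h # vs[i := p]) + b * T (h # vs[i := q])"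
    by simp
qed

lemma multilinear_linear_head:
  assumes "multilinear (Suc j) T" "length ws = j"
  shows "linear (\<lambda>h. T (h # ws))"
proof -
  have lc: "T ((a *\<^sub>R p + b *\<^sub>R q) # ws) = a * T (p # ws) + b * T (q # ws)" for a b p q
    using assms unfolding multilinear_def
    by (metis (no_types, lifting) length_Cons list_update_code(2) zero_less_Suc)
  show ?thesis
    by (rule linearI) (use lc[of 1 _ 1] lc[of _ _ 0] in simp_all)
qed

lemma multilinear_diff:
  "multilinear j A \<Longrightarrow> multilinear j B \<Longrightarrow> multilinear j (\<lambda>vs. A vs - B vs)"
  by (simp add: multilinear_def algebra_simps)

lemma multilinear_scaleR_all:
  assumes "multilinear j T" "length vs = j"
  shows "T (map ((*\<^sub>R) c) vs) = c ^ j * T vs"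
  using assms
proof (induction j arbitrary: T vs)
  case 0
  then show ?case by simp
next
  case (Suc j)
  then obtain h ws where vs: "vs = h # ws" and l: "length ws = j"
    by (cases vs) auto
  have "T (map ((*\<^sub>R) c) vs) = c * T (h # map ((*\<^sub>R) c) ws)"
    using linear_scale[OF multilinear_linear_head[OF Suc.prems(1)]] l by (simp add: vs)
  also have "T (h # map ((*\<^sub>R) c) ws) = c ^ j * T (h # ws)"
    using Suc.IH[OF multilinear_Cons[OF Suc.prems(1)] l] .
  finally show ?case by (simp add: vs)
qed

lemma abs_linear_le_sum_Basis:
  fixes L :: "'a::euclidean_space \<Rightarrow> real"
  assumes L: "linear L" and u: "norm u \<le> 1" and C: "\<And>b. b \<in> Basis \<Longrightarrow> \<bar>L b\<bar> \<le> C b"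
  shows "\<bar>L u\<bar> \<le> (\<Sum>b\<in>Basis. C b)"
proof -
  have "L u = (\<Sum>b\<in>Basis. (u \<bullet> b) * L b)"
    using linear_sum[OF L, of "\<lambda>b. (u \<bullet> b) *\<^sub>R b" Basis] linear_scale[OF L]
    by (simp add: euclidean_representation)
  also have "\<bar>\<dots>\<bar> \<le> (\<Sum>b\<in>Basis. \<bar>u \<bullet> b\<bar> * \<bar>L b\<bar>)"
    by (rule order_trans[OF sum_abs]) (simp add: abs_mult)
  also have "\<dots> \<le> (\<Sum>b\<in>Basis. C b)"
  proof (rule sum_mono)
    fix b :: 'a assume b: "b \<in> Basis"
    have "\<bar>u \<bullet> b\<bar> \<le> 1" using Basis_le_norm[OF b, of u] u by simp
    then show "\<bar>u \<bullet> b\<bar> * \<bar>L b\<bar> \<le> C b"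
      using C[OF b] by (meson abs_ge_zero mult_left_le_one_le order_trans)
  qed
  finally show ?thesis .
qed

lemma multilinear_bounded:
  fixes T :: "'a::euclidean_space list \<Rightarrow> real"
  assumes "multilinear j T"
  shows "\<exists>C. \<forall>vs. length vs = j \<and> (\<forall>v\<in>set vs. norm v \<le> 1) \<longrightarrow> \<bar>T vs\<bar> \<le> C"
  using assms
proof (induction j arbitrary: T)
  case 0
  then show ?case by (intro exI[of _ "\<bar>T []\<bar>"]) auto
next
  case (Suc j)
  obtain C where C: "\<And>b ws. length ws = j \<Longrightarrow> (\<forall>v\<in>set ws. norm v \<le> 1) \<Longrightarrow> \<bar>T (b # ws)\<bar> \<le> C b"
    using Suc.IH[OF multilinear_Cons[OF Suc.prems]] by metis
  have "\<bar>T (h # ws)\<bar> \<le> (\<Sum>b\<in>Basis. C b)"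
    if "norm h \<le> 1" "length ws = j" "\<forall>v\<in>set ws. norm v \<le> 1" for h ws
    using abs_linear_le_sum_Basis[OF multilinear_linear_head[OF Suc.prems] that(1)] C that(2,3)
    by blast
  then show ?case
    by (intro exI[of _ "\<Sum>b\<in>Basis. C b"]) (auto simp: length_Suc_conv)
qed

lemma tnorm_nonneg_and_bound:
  fixes T :: "'a::euclidean_space list \<Rightarrow> real"
  assumes "multilinear j T"
  shows "0 \<le> tnorm j T" and "\<bar>T (replicate j v)\<bar> \<le> tnorm j T * norm v ^ j"
proof -
  have le: "\<bar>T (replicate j w)\<bar> \<le> tnorm j T" if "norm w \<le> 1" for w
    unfolding tnorm_def
    using multilinear_bounded[OF assms] that
    by (intro cSup_upper) (auto simp: bdd_above_def)
  show "0 \<le> tnorm j T" using le[of 0] by simp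
  have "T (replicate j v) = norm v ^ j * T (replicate j (sgn v))"
    using multilinear_scaleR_all[OF assms, of "replicate j (sgn v)" "norm v"]
    by (cases "v = 0") (simp_all add: sgn_div_norm)
  also have "\<bar>\<dots>\<bar> \<le> norm v ^ j * tnorm j T"
    by (simp add: abs_mult mult_left_mono le norm_sgn)
  finally show "\<bar>T (replicate j v)\<bar> \<le> tnorm j T * norm v ^ j"
    by (simp add: mult.commute)
qed

lemma xynorm_nonneg_and_bound:
  fixes T :: "'a::euclidean_space \<Rightarrow> 'b::euclidean_space list \<Rightarrow> real"
  assumes lin: "\<And>vs. length vs = j \<Longrightarrow> linear (\<lambda>u. T u vs)"
    and ml: "\<And>u. multilinear j (T u)"
  shows "0 \<le> xynorm j T" and "\<bar>T u (replicate j v)\<bar> \<le> xynorm j T * norm u * norm v ^ j"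
proof -
  obtain C where C: "\<And>b vs. length vs = j \<Longrightarrow> (\<forall>v\<in>set vs. norm v \<le> 1) \<Longrightarrow> \<bar>T b vs\<bar> \<le> C b"
    using multilinear_bounded[OF ml] by metis
  have bdd: "bdd_above {\<bar>T u vs\<bar> | u vs. norm u \<le> 1 \<and> length vs = j \<and> (\<forall>v\<in>set vs. norm v \<le> 1)}"
    using abs_linear_le_sum_Basis[OF lin, of _ _ C] C unfolding bdd_above_def by blast
  have le: "\<bar>T u' (replicate j w)\<bar> \<le> xynorm j T" if "norm u' \<le> 1" "norm w \<le> 1" for u' w
    unfolding xynorm_def using that
    by (intro cSup_upper[OF _ bdd]) (auto intro!: exI[of _ u'] exI[of _ "replicate j w"])
  show "0 \<le> xynorm j T" using le[of 0 0] by simp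
  have "T u (replicate j v) = norm u * (norm v ^ j * T (sgn u) (replicate j (sgn v)))"
    using linear_scale[OF lin[of "replicate j v"], of "norm u" "sgn u"]
      multilinear_scaleR_all[OF ml[of "sgn u"], of "replicate j (sgn v)" "norm v"]
    by (cases "u = 0"; cases "v = 0") (simp_all add: sgn_div_norm)
  also have "\<bar>\<dots>\<bar> \<le> norm u * (norm v ^ j * xynorm j T)"
    by (simp add: abs_mult mult_left_mono le norm_sgn)
  finally show "\<bar>T u (replicate j v)\<bar> \<le> xynorm j T * norm u * norm v ^ j"
    by (simp add: ac_simps)
qed

lemma ydiff_multilinear:
  fixes f :: "'a \<Rightarrow> 'b::euclidean_space \<Rightarrow> real"
  assumes Y: "convex Y" "interior Y \<noteq> {}" and ex: "ydiff_exists f X Y k"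
    and x: "x \<in> X" and y: "y \<in> Y" and j: "j \<le> k"
  shows "multilinear j (ydiff f Y j x y)"
  using y j
proof (induction j arbitrary: y)
  case 0
  then show ?case by (simp add: multilinear_def)
next
  case (Suc j)
  have IH: "\<And>y. y \<in> Y \<Longrightarrow> multilinear j (ydiff f Y j x y)"
    using Suc by simp
  have dif: "\<And>ws. length ws = j \<Longrightarrow> (\<lambda>y'. ydiff f Y j x y' ws) differentiable (at y within Y)"
    using ex x Suc.prems unfolding ydiff_exists_def by auto
  show ?case
    unfolding multilinear_def
  proof (intro allI impI)
    fix i p q a b and vs :: "'b list"
    assume i: "i < Suc j" and l: "length vs = Suc j"
    then obtain h ws where vs: "vs = h # ws" and lw: "length ws = j"
      by (cases vs) auto
    show "ydiff f Y (Suc j) x y (vs[i := a *\<^sub>R p + b *\<^sub>R q]) =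
          a * ydiff f Y (Suc j) x y (vs[i := p]) + b * ydiff f Y (Suc j) x y (vs[i := q])"
    proof (cases i)
      case 0
      have "linear (frechet_derivative (\<lambda>y'. ydiff f Y j x y' ws) (at y within Y))"
        using dif[OF lw] by (rule linear_frechet_derivative)
      then show ?thesis using 0 vs by (simp add: linear_add linear_scale)
    next
      case (Suc i')
      have "ydiff f Y j x y' (ws[i' := a *\<^sub>R p + b *\<^sub>R q]) =
          a * ydiff f Y j x y' (ws[i' := p]) + b * ydiff f Y j x y' (ws[i' := q])" if "y' \<in> Y" for y'
        using IH[OF that] i Suc lw unfolding multilinear_def by simp
      then show ?thesis
        using Suc vs frechet_derivative_lincomb_convex[OF Y Suc.prems(1)] dif lw by simp
    qed
  qed
qed

lemma xydiff_linear:
  assumes "xydiff_exists f X Y j" and "x \<in> X" "y \<in> Y" "length vs = j"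
  shows "linear (\<lambda>u. xydiff f X Y j x y u vs)"
  using assms unfolding xydiff_def xydiff_exists_def by (blast intro: linear_frechet_derivative)

lemma xydiff_multilinear:
  fixes f :: "'a::euclidean_space \<Rightarrow> 'b::euclidean_space \<Rightarrow> real"
  assumes X: "convex X" "interior X \<noteq> {}" and Y: "convex Y" "interior Y \<noteq> {}"
    and ex: "ydiff_exists f X Y k" and exx: "xydiff_exists f X Y k" and x: "x \<in> X" and y: "y \<in> Y"
  shows "multilinear k (xydiff f X Y k x y u)"
  unfolding multilinear_def
proof (intro allI impI)
  fix i p q a b and ws :: "'b list"
  assume i: "i < k" and lw: "length ws = k"
  have dif: "\<And>ws. length ws = k \<Longrightarrow> (\<lambda>x'. ydiff f Y k x' y ws) differentiable (at x within X)"
    using exx x y unfolding xydiff_exists_def by blast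
  have "ydiff f Y k x' y (ws[i := a *\<^sub>R p + b *\<^sub>R q]) =
      a * ydiff f Y k x' y (ws[i := p]) + b * ydiff f Y k x' y (ws[i := q])" if "x' \<in> X" for x'
    using ydiff_multilinear[OF Y ex that y order.refl] i lw unfolding multilinear_def by blast
  then show "xydiff f X Y k x y u (ws[i := a *\<^sub>R p + b *\<^sub>R q]) =
      a * xydiff f X Y k x y u (ws[i := p]) + b * xydiff f X Y k x y u (ws[i := q])"
    unfolding xydiff_def using frechet_derivative_lincomb_convex[OF X x] dif lw by simp
qed

lemma xydiff_diff_bound:
  fixes f :: "'a::euclidean_space \<Rightarrow> 'b::euclidean_space \<Rightarrow> real"
  assumes X: "convex X" "interior X \<noteq> {}" and Y: "convex Y" "interior Y \<noteq> {}"
    and ex: "ydiff_exists f X Y k" and exx: "xydiff_exists f X Y k"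
    and x: "x \<in> X" "x' \<in> X" and y: "y \<in> Y"
  defines "T \<equiv> \<lambda>u vs. xydiff f X Y k x' y u vs - xydiff f X Y k x y u vs"
  shows "0 \<le> xynorm k T" and "\<bar>T u (replicate k v)\<bar> \<le> xynorm k T * norm u * norm v ^ k"
proof -
  have lin: "linear (\<lambda>u. T u vs)" if "length vs = k" for vs
    unfolding T_def using xydiff_linear[OF exx _ y that] x by (intro linear_compose_sub) auto
  have ml: "multilinear k (T u)" for u
    unfolding T_def using xydiff_multilinear[OF X Y ex exx _ y] x by (intro multilinear_diff) auto
  show "0 \<le> xynorm k T" by (rule xynorm_nonneg_and_bound(1)[OF lin ml])
  show "\<bar>T u (replicate k v)\<bar> \<le> xynorm k T * norm u * norm v ^ k"
    by (rule xynorm_nonneg_and_bound(2)[OF lin ml])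
qed

lemma mvt_unit_interval:
  fixes h h' :: "real \<Rightarrow> real"
  assumes ab: "0 \<le> a" "a < b" "b \<le> 1"
    and d: "\<And>t. t \<in> {0..1} \<Longrightarrow> (h has_real_derivative h' t) (at t within {0..1})"
  obtains \<xi> where "\<xi> \<in> {a<..<b}" "h b - h a = h' \<xi> * (b - a)"
proof -
  have "\<exists>\<xi>\<in>{a<..<b}. h b - h a = h' \<xi> * (b - a)"
  proof (rule mvt_simple[OF ab(2), of h "\<lambda>t. (*) (h' t)", simplified])
    fix t assume "a \<le> t" "t \<le> b"
    then have "t \<in> {0..1}" "{a..b} \<subseteq> {0..1}" using ab by auto
    then show "(h has_derivative (*) (h' t)) (at t within {a..b})"
      using has_derivative_subset has_field_derivative_imp_has_derivative d by blast
  qed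
  then show ?thesis using that by blast
qed

text \<open>The function \<open>g t + L/2 t\<^sup>2\<close> has a nondecreasing derivative, so it is convex and lies
  above its tangent at \<open>0\<close>.\<close>

lemma lipschitz_derivative_chord_bounds:
  fixes g g' :: "real \<Rightarrow> real"
  assumes d: "\<And>t. t \<in> {0..1} \<Longrightarrow> (g has_real_derivative g' t) (at t within {0..1})"
    and lip: "\<And>s t. s \<in> {0..1} \<Longrightarrow> t \<in> {0..1} \<Longrightarrow> \<bar>g' s - g' t\<bar> \<le> L * \<bar>s - t\<bar>"
  shows "\<And>t. t \<in> {0..1} \<Longrightarrow> g t \<le> (1 - t) * g 0 + t * g 1 + L / 2 * t * (1 - t)"
    and "g 0 + g' 0 - L / 2 \<le> g 1"
proof -
  define h where "h = (\<lambda>t. g t + L / 2 * t\<^sup>2)"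
  define h' where "h' = (\<lambda>t. g' t + L * t)"
  have hd: "(h has_real_derivative h' t) (at t within {0..1})" if "t \<in> {0..1}" for t
    unfolding h_def h'_def
    by (rule derivative_eq_intros d[OF that] refl)+ (simp add: power2_eq_square)
  have mono: "h' s \<le> h' t" if "s \<in> {0..1}" "t \<in> {0..1}" "s \<le> t" for s t
    using lip[OF that(2,1)] that(3) unfolding h'_def by (simp add: abs_le_iff algebra_simps)
  show "g t \<le> (1 - t) * g 0 + t * g 1 + L / 2 * t * (1 - t)" if t: "t \<in> {0..1}" for t
  proof (cases "t = 0 \<or> t = 1")
    case True
    then show ?thesis by auto
  next
    case False
    then have t01: "0 < t" "t < 1" using t by auto
    obtain \<xi> where \<xi>: "\<xi> \<in> {0<..<t}" "h t - h 0 = h' \<xi> * t"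
      using mvt_unit_interval[of 0 t h h'] hd t01 by auto
    obtain \<eta> where \<eta>: "\<eta> \<in> {t<..<1}" "h 1 - h t = h' \<eta> * (1 - t)"
      using mvt_unit_interval[of t 1 h h'] hd t01 by auto
    have "h' \<xi> \<le> h' \<eta>" using mono[of \<xi> \<eta>] \<xi> \<eta> t01 by auto
    then have "(1 - t) * (h t - h 0) - t * (h 1 - h t) \<le> 0"
      unfolding \<xi>(2) \<eta>(2) using t01
      by (simp add: mult_left_mono mult.left_commute[of t] mult.commute[of _ t] flip: right_diff_distrib)
    then have "h t \<le> (1 - t) * h 0 + t * h 1"
      by (simp add: algebra_simps)
    then have "g t + L / 2 * t\<^sup>2 \<le> (1 - t) * g 0 + t * (g 1 + L / 2)"
      by (simp add: h_def)
    moreover have "L / 2 * t * (1 - t) = L / 2 * t - L / 2 * t\<^sup>2" "t * (g 1 + L / 2) = t * g 1 + L / 2 * t"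
      by (simp_all add: power2_eq_square field_simps)
    ultimately show ?thesis by linarith
  qed
  obtain \<xi> where \<xi>: "\<xi> \<in> {0<..<1}" "h 1 - h 0 = h' \<xi>"
    using mvt_unit_interval[of 0 1 h h'] hd by auto
  have "h' 0 \<le> h' \<xi>" using mono[of 0 \<xi>] \<xi> by auto
  then show "g 0 + g' 0 - L / 2 \<le> g 1" using \<xi> unfolding h_def h'_def by simp
qed

lemma abs_le_of_abs_derivative_le:
  fixes r r' G G' :: "real \<Rightarrow> real"
  assumes dr: "\<And>t. t \<in> {0..1} \<Longrightarrow> (r has_real_derivative r' t) (at t within {0..1})"
    and dG: "\<And>t. t \<in> {0..1} \<Longrightarrow> (G has_real_derivative G' t) (at t within {0..1})"
    and le: "\<And>t. t \<in> {0..1} \<Longrightarrow> \<bar>r' t\<bar> \<le> G' t"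
    and "r 0 = 0" "G 0 = 0" and t: "t \<in> {0..1}"
  shows "\<bar>r t\<bar> \<le> G t"
proof (cases "t = 0")
  case True
  then show ?thesis using assms by simp
next
  case False
  then have t0: "0 < t" "t \<le> 1" using t by auto
  have dm: "((\<lambda>t. G t - r t) has_real_derivative G' t - r' t) (at t within {0..1})"
    and dp: "((\<lambda>t. G t + r t) has_real_derivative G' t + r' t) (at t within {0..1})"
    if "t \<in> {0..1}" for t
    using dG[OF that] dr[OF that] by (rule DERIV_diff, rule DERIV_add)
  obtain \<xi> where \<xi>: "\<xi> \<in> {0<..<t}" "(G t - r t) - (G 0 - r 0) = (G' \<xi> - r' \<xi>) * (t - 0)"
    using mvt_unit_interval[of 0 t, OF _ _ _ dm] t0 by auto
  obtain \<eta> where \<eta>: "\<eta> \<in> {0<..<t}" "(G t + r t) - (G 0 + r 0) = (G' \<eta> + r' \<eta>) * (t - 0)"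
    using mvt_unit_interval[of 0 t, OF _ _ _ dp] t0 by auto
  have "0 \<le> (G' \<xi> - r' \<xi>) * t" "0 \<le> (G' \<eta> + r' \<eta>) * t"
    using le[of \<xi>] le[of \<eta>] \<xi>(1) \<eta>(1) t0 by (auto simp: abs_le_iff)
  then show ?thesis using \<xi>(2) \<eta>(2) assms(4,5) by auto
qed

text \<open>The bound on the top derivative is integrated \<open>k\<close> times; the Lagrange form of Taylor's theorem
  would lose the factor \<open>1/(k+1)\<close> in the \<open>A\<close>-term.\<close>

lemma taylor_remainder_bound_unit_interval:
  fixes Q :: "nat \<Rightarrow> real \<Rightarrow> real"
  assumes "\<And>j t. j < k \<Longrightarrow> t \<in> {0..1} \<Longrightarrow> (Q j has_real_derivative Q (Suc j) t) (at t within {0..1})"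
    and "\<And>t. t \<in> {0..1} \<Longrightarrow> \<bar>Q k t - Q k 0\<bar> \<le> A * t + B"
    and "t \<in> {0..1}"
  shows "\<bar>Q 0 t - (\<Sum>j\<le>k. Q j 0 * t ^ j / fact j)\<bar> \<le> A * t ^ Suc k / fact (Suc k) + B * t ^ k / fact k"
  using assms
proof (induction k arbitrary: Q t)
  case 0
  then show ?case by simp
next
  case (Suc k)
  have IH: "\<bar>Q 1 t - (\<Sum>j\<le>k. Q (Suc j) 0 * t ^ j / fact j)\<bar> \<le> A * t ^ Suc k / fact (Suc k) + B * t ^ k / fact k"
    if "t \<in> {0..1}" for t
    using Suc.IH[of "\<lambda>j. Q (Suc j)"] Suc.prems(1,2) that by simp
  have pd: "((\<lambda>t::real. t ^ Suc j / fact (Suc j)) has_real_derivative t ^ j / fact j) (at t within {0..1})"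
    for j t
  proof -
    have "((\<lambda>t::real. t ^ Suc j / fact (Suc j)) has_real_derivative real (Suc j) * t ^ j / fact (Suc j)) (at t)"
      by (intro derivative_eq_intros) auto
    then show ?thesis by (simp add: fact_Suc has_field_derivative_at_within del: of_nat_Suc)
  qed
  have sum_shift: "(\<Sum>j\<le>Suc k. Q j 0 * t ^ j / fact j) =
      Q 0 0 + (\<Sum>j\<le>k. Q (Suc j) 0 * (t ^ Suc j / fact (Suc j)))" for t :: real
    unfolding sum.atMost_Suc_shift by (simp del: fact_Suc power_Suc sum.atMost_Suc)
  define r where "r = (\<lambda>t. Q 0 t - (\<Sum>j\<le>Suc k. Q j 0 * t ^ j / fact j))"
  define G where "G = (\<lambda>t::real. A * (t ^ Suc (Suc k) / fact (Suc (Suc k))) + B * (t ^ Suc k / fact (Suc k)))"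
  have "\<bar>r t\<bar> \<le> G t"
  proof (rule abs_le_of_abs_derivative_le[of r _ G, OF _ _ IH])
    fix t :: real assume t: "t \<in> {0..1}"
    have "((\<lambda>t. Q 0 t - (Q 0 0 + (\<Sum>j\<le>k. Q (Suc j) 0 * (t ^ Suc j / fact (Suc j))))) has_real_derivative
        Q 1 t - (0 + (\<Sum>j\<le>k. Q (Suc j) 0 * (t ^ j / fact j)))) (at t within {0..1})"
      using Suc.prems(1)[of 0 t] t by (intro DERIV_diff DERIV_add DERIV_const DERIV_sum DERIV_cmult pd) simp
    then show "(r has_real_derivative Q 1 t - (\<Sum>j\<le>k. Q (Suc j) 0 * t ^ j / fact j)) (at t within {0..1})"
      unfolding r_def sum_shift by simp
    have "(G has_real_derivative A * (t ^ Suc k / fact (Suc k)) + B * (t ^ k / fact k)) (at t within {0..1})"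
      unfolding G_def by (intro DERIV_add DERIV_cmult pd)
    then show "(G has_real_derivative A * t ^ Suc k / fact (Suc k) + B * t ^ k / fact k) (at t within {0..1})"
      by simp
  qed (use Suc.prems(3) in \<open>simp_all add: r_def G_def\<close>)
  then show ?case by (simp add: r_def G_def del: fact_Suc power_Suc)
qed

lemma convex_segment_point:
  "convex S \<Longrightarrow> a \<in> S \<Longrightarrow> b \<in> S \<Longrightarrow> t \<in> {0..1} \<Longrightarrow> a + t *\<^sub>R (b - a) \<in> S"
  using convexD_alt[of S a b t] by (simp add: algebra_simps)

lemma has_real_derivative_along_segment:
  fixes h :: "'a::real_normed_vector \<Rightarrow> real"
  assumes S: "convex S" "a \<in> S" "b \<in> S" and t: "t \<in> {0..1}"
    and d: "(h has_derivative D) (at (a + t *\<^sub>R (b - a)) within S)"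
  shows "((\<lambda>t. h (a + t *\<^sub>R (b - a))) has_real_derivative D (b - a)) (at t within {0..1})"
proof -
  have "((\<lambda>t. a + t *\<^sub>R (b - a)) has_derivative (\<lambda>s. s *\<^sub>R (b - a))) (at t within {0..1})"
    by (auto intro!: derivative_eq_intros)
  moreover have "(\<lambda>t. a + t *\<^sub>R (b - a)) ` {0..1} \<subseteq> S"
    using convex_segment_point[OF S] by auto
  ultimately have "((\<lambda>t. h (a + t *\<^sub>R (b - a))) has_derivative (\<lambda>s. D (s *\<^sub>R (b - a)))) (at t within {0..1})"
    using diff_chain_within[of _ _ t "{0..1}" h D] has_derivative_subset[OF d] by (simp add: comp_def)
  moreover have "(\<lambda>s. D (s *\<^sub>R (b - a))) = (*) (D (b - a))"
    using linear_scale[OF has_derivative_linear[OF d]] by (simp add: fun_eq_iff mult.commute)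
  ultimately show ?thesis by (simp add: has_field_derivative_def)
qed

section \<open>Weak convexity\<close>

text \<open>On a convex set this is the convexity of \<open>\<phi> + c/2 \<parallel>\<cdot>\<parallel>\<^sup>2\<close>; negative \<open>c\<close> means strong convexity.\<close>

definition weakly_convex_on :: "real \<Rightarrow> 'a::real_normed_vector set \<Rightarrow> ('a \<Rightarrow> real) \<Rightarrow> bool" where
  "weakly_convex_on c S \<phi> \<longleftrightarrow> (\<forall>a\<in>S. \<forall>b\<in>S. \<forall>t\<in>{0..1}.
     \<phi> ((1 - t) *\<^sub>R a + t *\<^sub>R b) \<le> (1 - t) * \<phi> a + t * \<phi> b + c / 2 * t * (1 - t) * (norm (a - b))\<^sup>2)"

lemma weakly_convex_onD:
  "weakly_convex_on c S \<phi> \<Longrightarrow> a \<in> S \<Longrightarrow> b \<in> S \<Longrightarrow> 0 \<le> (t::real) \<Longrightarrow> t \<le> 1 \<Longrightarrow>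
     \<phi> ((1 - t) *\<^sub>R a + t *\<^sub>R b) \<le> (1 - t) * \<phi> a + t * \<phi> b + c / 2 * t * (1 - t) * (norm (a - b))\<^sup>2"
  unfolding weakly_convex_on_def by auto

lemma weakly_convex_on_mono:
  assumes "weakly_convex_on c S \<phi>" "c \<le> c'"
  shows "weakly_convex_on c' S \<phi>"
  unfolding weakly_convex_on_def
proof (intro ballI)
  fix a b and t :: real assume "a \<in> S" "b \<in> S" "t \<in> {0..1}"
  moreover have "c / 2 * t * (1 - t) * (norm (a - b))\<^sup>2 \<le> c' / 2 * t * (1 - t) * (norm (a - b))\<^sup>2"
    using \<open>t \<in> {0..1}\<close> assms(2) by (intro mult_right_mono) auto
  ultimately show "\<phi> ((1 - t) *\<^sub>R a + t *\<^sub>R b) \<le> (1 - t) * \<phi> a + t * \<phi> b + c' / 2 * t * (1 - t) * (norm (a - b))\<^sup>2"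
    using weakly_convex_onD[OF assms(1)] by fastforce
qed

lemma weakly_convex_on_SUP:
  assumes Y: "Y \<noteq> {}" and wc: "\<And>y. y \<in> Y \<Longrightarrow> weakly_convex_on c S (\<lambda>x. g x y)"
    and bdd: "\<And>x. x \<in> S \<Longrightarrow> bdd_above (g x ` Y)"
  shows "weakly_convex_on c S (\<lambda>x. SUP y\<in>Y. g x y)"
  unfolding weakly_convex_on_def
proof (intro ballI cSUP_least[OF Y])
  fix a b y and t :: real assume a: "a \<in> S" and b: "b \<in> S" and t: "t \<in> {0..1}" and y: "y \<in> Y"
  have "(1 - t) * g a y + t * g b y \<le> (1 - t) * (SUP y\<in>Y. g a y) + t * (SUP y\<in>Y. g b y)"
    using t cSUP_upper[OF y bdd[OF a]] cSUP_upper[OF y bdd[OF b]] by (intro add_mono mult_left_mono) auto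
  then show "g ((1 - t) *\<^sub>R a + t *\<^sub>R b) y \<le>
      (1 - t) * (SUP y\<in>Y. g a y) + t * (SUP y\<in>Y. g b y) + c / 2 * t * (1 - t) * (norm (a - b))\<^sup>2"
    using wc[OF y, unfolded weakly_convex_on_def] a b t by fastforce
qed

lemma lipschitz_derivative_weakly_convex:
  fixes h :: "'a::real_normed_vector \<Rightarrow> real"
  assumes S: "convex S"
    and d: "\<And>z. z \<in> S \<Longrightarrow> (h has_derivative Dh z) (at z within S)"
    and lip: "\<And>z1 z2 u. z1 \<in> S \<Longrightarrow> z2 \<in> S \<Longrightarrow> \<bar>Dh z1 u - Dh z2 u\<bar> \<le> L * norm (z1 - z2) * norm u"
  shows "weakly_convex_on L S h" and "weakly_convex_on L S (\<lambda>z. - h z)"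
    and "\<And>a b. a \<in> S \<Longrightarrow> b \<in> S \<Longrightarrow> h a + Dh a (b - a) - L / 2 * (norm (a - b))\<^sup>2 \<le> h b"
proof -
  have along: "((\<lambda>t. h (a + t *\<^sub>R (b - a))) has_real_derivative Dh (a + t *\<^sub>R (b - a)) (b - a))
      (at t within {0..1})" if "a \<in> S" "b \<in> S" "t \<in> {0..1}" for a b t
    using that by (intro has_real_derivative_along_segment[OF S] d convex_segment_point[OF S])
  have lip_along: "\<bar>Dh (a + s *\<^sub>R (b - a)) (b - a) - Dh (a + t *\<^sub>R (b - a)) (b - a)\<bar>
      \<le> (L * (norm (a - b))\<^sup>2) * \<bar>s - t\<bar>" if "a \<in> S" "b \<in> S" "s \<in> {0..1}" "t \<in> {0..1}" for a b s t
  proof -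
    have "norm ((a + s *\<^sub>R (b - a)) - (a + t *\<^sub>R (b - a))) = \<bar>s - t\<bar> * norm (a - b)"
      by (simp add: norm_minus_commute flip: scaleR_diff_left)
    then show ?thesis
      using lip[OF convex_segment_point[OF S that(1,2,3)] convex_segment_point[OF S that(1,2,4)], of "b - a"]
      by (simp add: norm_minus_commute power2_eq_square ac_simps)
  qed
  have segment_eq: "a + t *\<^sub>R (b - a) = (1 - t) *\<^sub>R a + t *\<^sub>R b" for a b :: 'a and t
    by (simp add: algebra_simps)
  show "weakly_convex_on L S h"
    unfolding weakly_convex_on_def
  proof (intro ballI)
    fix a b and t :: real assume ab: "a \<in> S" "b \<in> S" and t: "t \<in> {0..1}"
    show "h ((1 - t) *\<^sub>R a + t *\<^sub>R b) \<le> (1 - t) * h a + t * h b + L / 2 * t * (1 - t) * (norm (a - b))\<^sup>2"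
      using lipschitz_derivative_chord_bounds(1)[OF along[OF ab] lip_along[OF ab] t]
      by (simp add: segment_eq mult_ac)
  qed
  show "weakly_convex_on L S (\<lambda>z. - h z)"
    unfolding weakly_convex_on_def
  proof (intro ballI)
    fix a b and t :: real assume ab: "a \<in> S" "b \<in> S" and t: "t \<in> {0..1}"
    have lip_neg: "\<bar>- Dh (a + s *\<^sub>R (b - a)) (b - a) - - Dh (a + s' *\<^sub>R (b - a)) (b - a)\<bar>
        \<le> (L * (norm (a - b))\<^sup>2) * \<bar>s - s'\<bar>" if "s \<in> {0..1}" "s' \<in> {0..1}" for s s'
      using lip_along[OF ab that] by (simp add: abs_minus_commute)
    show "- h ((1 - t) *\<^sub>R a + t *\<^sub>R b) \<le>
        (1 - t) * - h a + t * - h b + L / 2 * t * (1 - t) * (norm (a - b))\<^sup>2"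
      using lipschitz_derivative_chord_bounds(1)[OF DERIV_minus[OF along[OF ab]] lip_neg t]
      by (simp add: segment_eq mult_ac)
  qed
  show "h a + Dh a (b - a) - L / 2 * (norm (a - b))\<^sup>2 \<le> h b" if "a \<in> S" "b \<in> S" for a b
    using lipschitz_derivative_chord_bounds(2)[OF along[OF that] lip_along[OF that]] by simp
qed

lemma weakly_convex_on_add_sq_dist:
  fixes \<psi> :: "'a::real_inner \<Rightarrow> real"
  assumes "weakly_convex_on c S \<psi>"
  shows "weakly_convex_on (c - 2 * d) S (\<lambda>u. \<psi> u + d * (norm (u - x))\<^sup>2)"
  unfolding weakly_convex_on_def
proof (intro ballI)
  fix a b and t :: real assume ab: "a \<in> S" "b \<in> S" and t: "t \<in> {0..1}"
  define m where "m = (1 - t) *\<^sub>R a + t *\<^sub>R b"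
  have "m - x = (1 - t) *\<^sub>R (a - x) + t *\<^sub>R (b - x)"
    by (simp add: m_def algebra_simps)
  then have m: "(norm (m - x))\<^sup>2 =
      (1 - t) * (norm (a - x))\<^sup>2 + t * (norm (b - x))\<^sup>2 - t * (1 - t) * (norm (a - b))\<^sup>2"
    by (simp only: power2_norm_eq_inner) (simp add: inner_simps inner_commute algebra_simps)
  have "\<psi> m \<le> (1 - t) * \<psi> a + t * \<psi> b + c / 2 * t * (1 - t) * (norm (a - b))\<^sup>2"
    using weakly_convex_onD[OF assms ab] t by (simp add: m_def)
  moreover have "(1 - t) * (\<psi> a + d * (norm (a - x))\<^sup>2) + t * (\<psi> b + d * (norm (b - x))\<^sup>2) +
      (c - 2 * d) / 2 * t * (1 - t) * (norm (a - b))\<^sup>2 - (\<psi> m + d * (norm (m - x))\<^sup>2) =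
      (1 - t) * \<psi> a + t * \<psi> b + c / 2 * t * (1 - t) * (norm (a - b))\<^sup>2 - \<psi> m"
    unfolding m by (simp add: field_simps)
  ultimately show "\<psi> ((1 - t) *\<^sub>R a + t *\<^sub>R b) + d * (norm ((1 - t) *\<^sub>R a + t *\<^sub>R b - x))\<^sup>2 \<le>
      (1 - t) * (\<psi> a + d * (norm (a - x))\<^sup>2) + t * (\<psi> b + d * (norm (b - x))\<^sup>2) +
      (c - 2 * d) / 2 * t * (1 - t) * (norm (a - b))\<^sup>2"
    unfolding m_def[symmetric] by linarith
qed

section \<open>Moreau envelopes of weakly convex functions\<close>

lemma gderiv_of_quadratic_remainder:
  fixes E :: "'a::real_inner \<Rightarrow> real"
  assumes C: "C > 0" and q: "\<And>h. \<bar>E (x + h) - E x - h \<bullet> g\<bar> \<le> C * (norm h)\<^sup>2"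
  shows "GDERIV E x :> g"
  unfolding gderiv_def has_derivative_at_alt
proof (intro conjI allI impI bounded_linear_inner_left)
  fix e :: real assume e: "e > 0"
  show "\<exists>d>0. \<forall>y. norm (y - x) < d \<longrightarrow> norm (E y - E x - (y - x) \<bullet> g) \<le> e * norm (y - x)"
  proof (intro exI[of _ "e / C"] conjI allI impI)
    fix y assume y: "norm (y - x) < e / C"
    have "norm (E y - E x - (y - x) \<bullet> g) \<le> (C * norm (y - x)) * norm (y - x)"
      using q[of "y - x"] by (simp add: power2_eq_square mult.assoc)
    also have "\<dots> \<le> e * norm (y - x)"
      using y C by (intro mult_right_mono) (auto simp: field_simps)
    finally show "norm (E y - E x - (y - x) \<bullet> g) \<le> e * norm (y - x)" .
  qed (use e C in simp)
qed

lemma minimizing_sequence: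
  fixes F :: "'a \<Rightarrow> real"
  assumes "S \<noteq> {}" "bdd_below (F ` S)"
  obtains s where "\<And>n. s n \<in> S" "(\<lambda>n. F (s n)) \<longlonglongrightarrow> Inf (F ` S)"
proof -
  have "\<exists>u\<in>S. F u < Inf (F ` S) + 1 / Suc n" for n
    using cInf_lessD[of "F ` S" "Inf (F ` S) + 1 / Suc n"] assms(1) by auto
  then obtain s where sS: "\<And>n. s n \<in> S" and sF: "\<And>n. F (s n) < Inf (F ` S) + 1 / Suc n"
    by metis
  have "(\<lambda>n. F (s n)) \<longlonglongrightarrow> Inf (F ` S)"
  proof (rule tendsto_sandwich[of "\<lambda>n. Inf (F ` S)" _ _ "\<lambda>n. Inf (F ` S) + 1 / Suc n"])
    show "\<forall>\<^sub>F n in sequentially. Inf (F ` S) \<le> F (s n)"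
      using sS assms(2) by (simp add: cInf_lower)
    show "\<forall>\<^sub>F n in sequentially. F (s n) \<le> Inf (F ` S) + 1 / Suc n"
      using sF by (simp add: less_imp_le)
    show "(\<lambda>n. Inf (F ` S) + 1 / Suc n) \<longlonglongrightarrow> Inf (F ` S)"
      using tendsto_add[OF tendsto_const LIMSEQ_Suc[OF lim_inverse_n']] by simp
  qed simp
  then show ?thesis using that sS by blast
qed

lemma strongly_convex_chord_above_Inf:
  assumes S: "convex S" and sc: "weakly_convex_on (- c) S F" and bdd: "bdd_below (F ` S)"
    and ab: "a \<in> S" "b \<in> S" and t: "0 \<le> t" "t \<le> 1"
  shows "t * (1 - t) * (c / 2 * (norm (a - b))\<^sup>2) \<le> (1 - t) * (F a - Inf (F ` S)) + t * (F b - Inf (F ` S))"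
  using cInf_lower[OF imageI[OF convexD_alt[OF S ab t]] bdd] weakly_convex_onD[OF sc ab t]
  by (simp add: algebra_simps)

text \<open>By the midpoint case of the chord inequality,
  \<open>\<parallel>s m - s n\<parallel>\<^sup>2 \<le> 4/c (F (s m) - inf F + F (s n) - inf F)\<close>.\<close>

lemma strongly_convex_minimizing_sequence_Cauchy:
  fixes F :: "'a::real_normed_vector \<Rightarrow> real"
  assumes S: "convex S" and c: "c > 0" and sc: "weakly_convex_on (- c) S F"
    and bdd: "bdd_below (F ` S)"
    and sS: "\<And>n. s n \<in> S" and sF: "(\<lambda>n. F (s n)) \<longlonglongrightarrow> Inf (F ` S)"
  shows "Cauchy s"
proof (rule metric_CauchyI)
  fix e :: real assume e: "e > 0"
  define M where "M = Inf (F ` S)"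
  have "\<forall>\<^sub>F n in sequentially. F (s n) < M + c * e\<^sup>2 / 8"
    using order_tendstoD(2)[OF sF[folded M_def], of "M + c * e\<^sup>2 / 8"] c e by simp
  then obtain N where N: "\<And>n. n \<ge> N \<Longrightarrow> F (s n) < M + c * e\<^sup>2 / 8"
    by (auto simp: eventually_sequentially)
  have "dist (s m) (s n) < e" if "m \<ge> N" "n \<ge> N" for m n
  proof -
    have "c / 8 * (norm (s m - s n))\<^sup>2 \<le> (F (s m) - M) / 2 + (F (s n) - M) / 2"
      using strongly_convex_chord_above_Inf[OF S sc bdd sS sS, of "1/2" m n] by (simp add: M_def)
    also have "\<dots> < c * e\<^sup>2 / 8"
      using N[OF that(1)] N[OF that(2)] by argo
    finally have "(norm (s m - s n))\<^sup>2 < e\<^sup>2"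
      using c by simp
    then show ?thesis
      using e by (simp add: dist_norm power_less_imp_less_base)
  qed
  then show "\<exists>N. \<forall>m\<ge>N. \<forall>n\<ge>N. dist (s m) (s n) < e" by blast
qed

text \<open>The limit \<open>p\<close> of a minimizing sequence may lie outside \<open>S\<close>, but it still plays the role of
  the minimizer: letting \<open>n \<rightarrow> \<infinity>\<close> in the chord inequality between \<open>s n\<close> and \<open>u\<close> and then \<open>t \<rightarrow> 0\<close>
  gives quadratic growth away from \<open>p\<close>.\<close>

lemma strongly_convex_growth_at_limit:
  fixes F :: "'a::real_normed_vector \<Rightarrow> real"
  assumes S: "convex S" and sc: "weakly_convex_on (- c) S F" and bdd: "bdd_below (F ` S)"
    and sS: "\<And>n. s n \<in> S" and sF: "(\<lambda>n. F (s n)) \<longlonglongrightarrow> Inf (F ` S)" and sp: "s \<longlonglongrightarrow> p"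
    and u: "u \<in> S"
  shows "Inf (F ` S) + c / 2 * (norm (u - p))\<^sup>2 \<le> F u"
proof -
  define M where "M = Inf (F ` S)"
  have "c / 2 * (norm (u - p))\<^sup>2 \<le> F u - M"
  proof (rule field_le_mult_one_interval)
    fix z :: real assume z: "0 < z" "z < 1"
    have "(1 - z) * z * (c / 2 * (norm (s n - u))\<^sup>2) \<le> z * (F (s n) - M) + (1 - z) * (F u - M)" for n
      using strongly_convex_chord_above_Inf[OF S sc bdd sS u, of "1 - z"] z by (simp add: M_def)
    moreover have "(\<lambda>n. (1 - z) * z * (c / 2 * (norm (s n - u))\<^sup>2)) \<longlonglongrightarrow> (1 - z) * z * (c / 2 * (norm (p - u))\<^sup>2)"
      by (intro tendsto_intros sp)
    moreover have "(\<lambda>n. z * (F (s n) - M) + (1 - z) * (F u - M)) \<longlonglongrightarrow> z * (M - M) + (1 - z) * (F u - M)"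
      by (intro tendsto_intros sF[folded M_def])
    ultimately have "(1 - z) * z * (c / 2 * (norm (p - u))\<^sup>2) \<le> z * (M - M) + (1 - z) * (F u - M)"
      by (intro LIMSEQ_le) auto
    then have "(1 - z) * (z * (c / 2 * (norm (u - p))\<^sup>2)) \<le> (1 - z) * (F u - M)"
      by (simp add: norm_minus_commute algebra_simps)
    then show "z * (c / 2 * (norm (u - p))\<^sup>2) \<le> F u - M"
      using z by simp
  qed
  then show ?thesis by (simp add: M_def)
qed

lemma moreau_prox_sequence:
  fixes \<psi> :: "'a::euclidean_space \<Rightarrow> real"
  assumes X: "convex X" "x \<in> X" and c: "c > 0" and wc: "weakly_convex_on c X \<psi>"
    and bdd: "bdd_below ((\<lambda>u. \<psi> u + c * (norm (u - x))\<^sup>2) ` X)"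
  obtains s p where "\<And>n. s n \<in> X" "s \<longlonglongrightarrow> p"
    "(\<lambda>n. \<psi> (s n) + c * (norm (s n - x))\<^sup>2) \<longlonglongrightarrow> moreau \<psi> X (2 * c) x"
    "\<And>u. u \<in> X \<Longrightarrow> moreau \<psi> X (2 * c) x + c / 2 * (norm (u - p))\<^sup>2 \<le> \<psi> u + c * (norm (u - x))\<^sup>2"
proof -
  define F where "F = (\<lambda>u. \<psi> u + c * (norm (u - x))\<^sup>2)"
  have M: "moreau \<psi> X (2 * c) x = Inf (F ` X)"
    by (simp add: moreau_def F_def)
  have sc: "weakly_convex_on (- c) X F"
    using weakly_convex_on_add_sq_dist[OF wc, of c x] by (simp add: F_def)
  obtain s where sX: "\<And>n. s n \<in> X" and sF: "(\<lambda>n. F (s n)) \<longlonglongrightarrow> Inf (F ` X)"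
    using minimizing_sequence[of X F] X(2) bdd by (auto simp: F_def)
  obtain p where sp: "s \<longlonglongrightarrow> p"
    using strongly_convex_minimizing_sequence_Cauchy[OF X(1) c sc _ sX sF] bdd
    by (auto simp: F_def Cauchy_convergent_iff convergent_def)
  show ?thesis
    using that[OF sX sp] sF strongly_convex_growth_at_limit[OF X(1) sc _ sX sF sp] bdd
    by (simp add: M F_def)
qed

lemma moreau_objective_lower_bound_prox:
  fixes \<psi> :: "'a::real_inner \<Rightarrow> real"
  assumes c: "c \<ge> 0" and u: "u \<in> X"
    and growth: "\<And>u. u \<in> X \<Longrightarrow> M + c / 2 * (norm (u - p))\<^sup>2 \<le> \<psi> u + c * (norm (u - x))\<^sup>2"
  shows "M + h \<bullet> ((2 * c) *\<^sub>R (x - p)) - c * (norm h)\<^sup>2 \<le> \<psi> u + c * (norm (u - (x + h)))\<^sup>2"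
proof -
  have shift: "(norm (a - h))\<^sup>2 = (norm a)\<^sup>2 - 2 * (a \<bullet> h) + (norm h)\<^sup>2" for a h :: 'a
    by (simp add: power2_norm_eq_inner inner_simps inner_commute)
  have e1: "(norm (u - (x + h)))\<^sup>2 = (norm (u - x))\<^sup>2 - 2 * ((u - x) \<bullet> h) + (norm h)\<^sup>2"
    using shift[of "u - x" h] by (simp add: algebra_simps)
  have e2: "(norm ((u - p) - 2 *\<^sub>R h))\<^sup>2 = (norm (u - p))\<^sup>2 - 4 * ((u - p) \<bullet> h) + 4 * (norm h)\<^sup>2"
    using shift[of "u - p" "2 *\<^sub>R h"] by (simp add: power2_eq_square)
  have e3: "(u - x) \<bullet> h = (u - p) \<bullet> h - (x - p) \<bullet> h" "h \<bullet> ((2 * c) *\<^sub>R (x - p)) = 2 * c * ((x - p) \<bullet> h)"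
    by (simp_all add: inner_simps inner_commute)
  have "\<psi> u + c * (norm (u - (x + h)))\<^sup>2 - (M + h \<bullet> ((2 * c) *\<^sub>R (x - p)) - c * (norm h)\<^sup>2) =
      (\<psi> u + c * (norm (u - x))\<^sup>2 - M - c / 2 * (norm (u - p))\<^sup>2) + c / 2 * (norm ((u - p) - 2 *\<^sub>R h))\<^sup>2"
    unfolding e1 e2 e3 by (simp add: field_simps)
  moreover have "0 \<le> c / 2 * (norm ((u - p) - 2 *\<^sub>R h))\<^sup>2"
    using c by simp
  ultimately show ?thesis using growth[OF u] by linarith
qed

lemma moreau_upper_bound_prox:
  fixes \<psi> :: "'a::real_inner \<Rightarrow> real"
  assumes sX: "\<And>n. s n \<in> X" and sp: "s \<longlonglongrightarrow> p"
    and sF: "(\<lambda>n. \<psi> (s n) + c * (norm (s n - x))\<^sup>2) \<longlonglongrightarrow> moreau \<psi> X (2 * c) x"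
    and bdd: "bdd_below ((\<lambda>u. \<psi> u + c * (norm (u - (x + h)))\<^sup>2) ` X)"
  shows "moreau \<psi> X (2 * c) (x + h) \<le> moreau \<psi> X (2 * c) x + h \<bullet> ((2 * c) *\<^sub>R (x - p)) + c * (norm h)\<^sup>2"
proof -
  have "moreau \<psi> X (2 * c) (x + h) \<le>
      \<psi> (s n) + c * (norm (s n - x))\<^sup>2 - 2 * c * ((s n - x) \<bullet> h) + c * (norm h)\<^sup>2" for n
  proof -
    have "moreau \<psi> X (2 * c) (x + h) \<le> \<psi> (s n) + c * (norm (s n - (x + h)))\<^sup>2"
      unfolding moreau_def using cINF_lower[OF bdd sX] by simp
    also have "(norm (s n - (x + h)))\<^sup>2 = (norm (s n - x))\<^sup>2 - 2 * ((s n - x) \<bullet> h) + (norm h)\<^sup>2"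
      by (simp add: power2_norm_eq_inner inner_simps inner_commute algebra_simps)
    finally show ?thesis by (simp add: algebra_simps)
  qed
  moreover have "(\<lambda>n. \<psi> (s n) + c * (norm (s n - x))\<^sup>2 - 2 * c * ((s n - x) \<bullet> h) + c * (norm h)\<^sup>2)
      \<longlonglongrightarrow> moreau \<psi> X (2 * c) x - 2 * c * ((p - x) \<bullet> h) + c * (norm h)\<^sup>2"
    by (intro tendsto_intros sF sp)
  ultimately have "moreau \<psi> X (2 * c) (x + h) \<le> moreau \<psi> X (2 * c) x - 2 * c * ((p - x) \<bullet> h) + c * (norm h)\<^sup>2"
    by (intro LIMSEQ_le_const) auto
  then show ?thesis
    by (simp add: inner_commute inner_simps algebra_simps)
qed

lemma moreau_gderiv_prox:
  fixes \<psi> :: "'a::real_inner \<Rightarrow> real"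
  assumes c: "c > 0" and sX: "\<And>n. s n \<in> X" and sp: "s \<longlonglongrightarrow> p"
    and sF: "(\<lambda>n. \<psi> (s n) + c * (norm (s n - x))\<^sup>2) \<longlonglongrightarrow> moreau \<psi> X (2 * c) x"
    and growth: "\<And>u. u \<in> X \<Longrightarrow> moreau \<psi> X (2 * c) x + c / 2 * (norm (u - p))\<^sup>2 \<le> \<psi> u + c * (norm (u - x))\<^sup>2"
  shows "GDERIV (moreau \<psi> X (2 * c)) x :> (2 * c) *\<^sub>R (x - p)"
proof (rule gderiv_of_quadratic_remainder[OF c])
  fix h
  have low: "moreau \<psi> X (2 * c) x + h \<bullet> ((2 * c) *\<^sub>R (x - p)) - c * (norm h)\<^sup>2 \<le> \<psi> u + c * (norm (u - (x + h)))\<^sup>2"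
    if "u \<in> X" for u
    using moreau_objective_lower_bound_prox[OF less_imp_le[OF c] that growth] .
  then have "bdd_below ((\<lambda>u. \<psi> u + c * (norm (u - (x + h)))\<^sup>2) ` X)"
    by (auto simp: bdd_below_def)
  moreover have "moreau \<psi> X (2 * c) x + h \<bullet> ((2 * c) *\<^sub>R (x - p)) - c * (norm h)\<^sup>2 \<le> moreau \<psi> X (2 * c) (x + h)"
    unfolding moreau_def[of _ _ _ "x + h"] using sX low by (intro cINF_greatest) auto
  ultimately show "\<bar>moreau \<psi> X (2 * c) (x + h) - moreau \<psi> X (2 * c) x - h \<bullet> ((2 * c) *\<^sub>R (x - p))\<bar>
      \<le> c * (norm h)\<^sup>2"
    using moreau_upper_bound_prox[OF sX sp sF, of h] by (simp add: abs_le_iff)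
qed

lemma prox_points_close:
  fixes p p' :: "'a::real_normed_vector"
  assumes sX: "\<And>n. s n \<in> X" and sp: "s \<longlonglongrightarrow> p" and sF: "(\<lambda>n. \<psi> (s n) + c * (norm (s n - x))\<^sup>2) \<longlonglongrightarrow> M"
    and growth: "\<And>u. u \<in> X \<Longrightarrow> M + c / 2 * (norm (u - p))\<^sup>2 \<le> \<psi> u + c * (norm (u - x))\<^sup>2"
    and sX': "\<And>n. s' n \<in> X" and sp': "s' \<longlonglongrightarrow> p'" and sF': "(\<lambda>n. \<psi>' (s' n) + c * (norm (s' n - x))\<^sup>2) \<longlonglongrightarrow> M'"
    and growth': "\<And>u. u \<in> X \<Longrightarrow> M' + c / 2 * (norm (u - p'))\<^sup>2 \<le> \<psi>' u + c * (norm (u - x))\<^sup>2"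
    and close: "\<And>u. u \<in> X \<Longrightarrow> \<bar>\<psi>' u - \<psi> u\<bar> \<le> \<epsilon>"
  shows "c * (norm (p' - p))\<^sup>2 \<le> 2 * \<epsilon>"
proof -
  have "M + c / 2 * (norm (p' - p))\<^sup>2 \<le> M' + \<epsilon>"
  proof (rule LIMSEQ_le)
    show "(\<lambda>n. M + c / 2 * (norm (s' n - p))\<^sup>2) \<longlonglongrightarrow> M + c / 2 * (norm (p' - p))\<^sup>2"
      by (intro tendsto_intros sp')
    show "(\<lambda>n. \<psi>' (s' n) + c * (norm (s' n - x))\<^sup>2 + \<epsilon>) \<longlonglongrightarrow> M' + \<epsilon>"
      by (intro tendsto_intros sF')
    show "\<exists>N. \<forall>n\<ge>N. M + c / 2 * (norm (s' n - p))\<^sup>2 \<le> \<psi>' (s' n) + c * (norm (s' n - x))\<^sup>2 + \<epsilon>"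
      using growth[OF sX'] close[OF sX'] unfolding abs_le_iff by (smt (verit))
  qed
  moreover have "M' + c / 2 * (norm (p - p'))\<^sup>2 \<le> M + \<epsilon>"
  proof (rule LIMSEQ_le)
    show "(\<lambda>n. M' + c / 2 * (norm (s n - p'))\<^sup>2) \<longlonglongrightarrow> M' + c / 2 * (norm (p - p'))\<^sup>2"
      by (intro tendsto_intros sp)
    show "(\<lambda>n. \<psi> (s n) + c * (norm (s n - x))\<^sup>2 + \<epsilon>) \<longlonglongrightarrow> M + \<epsilon>"
      by (intro tendsto_intros sF)
    show "\<exists>N. \<forall>n\<ge>N. M' + c / 2 * (norm (s n - p'))\<^sup>2 \<le> \<psi> (s n) + c * (norm (s n - x))\<^sup>2 + \<epsilon>"
      using growth'[OF sX] close[OF sX] unfolding abs_le_iff by (smt (verit))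
  qed
  ultimately show ?thesis by (simp add: norm_minus_commute)
qed

lemma moreau_gradients_close:
  fixes \<psi> \<psi>' :: "'a::euclidean_space \<Rightarrow> real"
  assumes X: "convex X" "x \<in> X" and c: "c > 0"
    and wc: "weakly_convex_on c X \<psi>" and wc': "weakly_convex_on c X \<psi>'"
    and bdd: "bdd_below ((\<lambda>u. \<psi> u + c * (norm (u - x))\<^sup>2) ` X)"
    and close: "\<And>u. u \<in> X \<Longrightarrow> \<bar>\<psi>' u - \<psi> u\<bar> \<le> \<epsilon>"
  shows "\<exists>g g'. GDERIV (moreau \<psi>' X (2 * c)) x :> g' \<and> GDERIV (moreau \<psi> X (2 * c)) x :> g \<and>
    norm (g' - g) \<le> sqrt (8 * c * \<epsilon>)"
proof -
  have bdd': "bdd_below ((\<lambda>u. \<psi>' u + c * (norm (u - x))\<^sup>2) ` X)"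
  proof -
    obtain m where "\<And>u. u \<in> X \<Longrightarrow> m \<le> \<psi> u + c * (norm (u - x))\<^sup>2"
      using bdd by (auto simp: bdd_below_def)
    then have "\<And>u. u \<in> X \<Longrightarrow> m - \<epsilon> \<le> \<psi>' u + c * (norm (u - x))\<^sup>2"
      using close by (force simp: abs_le_iff)
    then show ?thesis by (auto simp: bdd_below_def)
  qed
  obtain s p where prox: "\<And>n. s n \<in> X" "s \<longlonglongrightarrow> p"
      "(\<lambda>n. \<psi> (s n) + c * (norm (s n - x))\<^sup>2) \<longlonglongrightarrow> moreau \<psi> X (2 * c) x"
      "\<And>u. u \<in> X \<Longrightarrow> moreau \<psi> X (2 * c) x + c / 2 * (norm (u - p))\<^sup>2 \<le> \<psi> u + c * (norm (u - x))\<^sup>2"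
    using moreau_prox_sequence[OF X c wc bdd] by blast
  obtain s' p' where prox': "\<And>n. s' n \<in> X" "s' \<longlonglongrightarrow> p'"
      "(\<lambda>n. \<psi>' (s' n) + c * (norm (s' n - x))\<^sup>2) \<longlonglongrightarrow> moreau \<psi>' X (2 * c) x"
      "\<And>u. u \<in> X \<Longrightarrow> moreau \<psi>' X (2 * c) x + c / 2 * (norm (u - p'))\<^sup>2 \<le> \<psi>' u + c * (norm (u - x))\<^sup>2"
    using moreau_prox_sequence[OF X c wc' bdd'] by blast
  have "c * (norm (p' - p))\<^sup>2 \<le> 2 * \<epsilon>"
    by (rule prox_points_close[OF prox prox' close])
  then have "(norm ((2 * c) *\<^sub>R (x - p') - (2 * c) *\<^sub>R (x - p)))\<^sup>2 \<le> 8 * c * \<epsilon>"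
    using c by (simp add: norm_minus_commute power2_eq_square algebra_simps flip: scaleR_diff_right)
  then show ?thesis
    using moreau_gderiv_prox[OF c prox] moreau_gderiv_prox[OF c prox'] by (blast intro: real_le_rsqrt)
qed

lemma abs_cSUP_diff_le:
  fixes g g' :: "'y \<Rightarrow> real"
  assumes Y: "Y \<noteq> {}" and bdd: "bdd_above (g ` Y)" "bdd_above (g' ` Y)"
    and close: "\<And>y. y \<in> Y \<Longrightarrow> \<bar>g' y - g y\<bar> \<le> \<epsilon>"
  shows "\<bar>(SUP y\<in>Y. g' y) - (SUP y\<in>Y. g y)\<bar> \<le> \<epsilon>"
proof -
  have "(SUP y\<in>Y. g' y) \<le> (SUP y\<in>Y. g y) + \<epsilon>"
    using cSUP_upper[OF _ bdd(1)] close by (intro cSUP_least[OF Y]) (force simp: abs_le_iff)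
  moreover have "(SUP y\<in>Y. g y) \<le> (SUP y\<in>Y. g' y) + \<epsilon>"
    using cSUP_upper[OF _ bdd(2)] close by (intro cSUP_least[OF Y]) (force simp: abs_le_iff)
  ultimately show ?thesis by linarith
qed

lemma moreau_zero_gderiv: "GDERIV (moreau \<psi> X 0) x :> 0"
proof -
  have "moreau \<psi> X 0 = (\<lambda>_. INF u\<in>X. \<psi> u)"
    by (simp add: moreau_def fun_eq_iff)
  then show ?thesis by (simp add: gderiv_def)
qed

lemma bdd_below_add_sq_dist:
  fixes \<phi> :: "'a::euclidean_space \<Rightarrow> real"
  assumes c: "c > 0" and L: "linear L"
    and minorant: "\<And>u. u \<in> X \<Longrightarrow> a + L (u - x) - c / 2 * (norm (u - x))\<^sup>2 \<le> \<phi> u"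
  shows "bdd_below ((\<lambda>u. \<phi> u + c * (norm (u - x))\<^sup>2) ` X)"
proof -
  obtain K where K: "\<And>w. norm (L w) \<le> K * norm w"
    using linear_bounded[OF L] by blast
  have "a - K\<^sup>2 / (2 * c) \<le> \<phi> u + c * (norm (u - x))\<^sup>2" if u: "u \<in> X" for u
  proof -
    have "- K * norm (u - x) \<le> L (u - x)"
      using K[of "u - x"] by (simp add: abs_le_iff)
    moreover have "0 \<le> c / 2 * (norm (u - x) - K / c)\<^sup>2"
      using c by simp
    moreover have "c / 2 * (norm (u - x) - K / c)\<^sup>2 = c / 2 * (norm (u - x))\<^sup>2 - K * norm (u - x) + K\<^sup>2 / (2 * c)"
      using c by (simp add: power2_eq_square field_simps)
    ultimately show ?thesis using minorant[OF u] by linarith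
  qed
  then show ?thesis by (auto simp: bdd_below_def)
qed

lemma primal_moreau_gradients_close:
  fixes g g' :: "'a::euclidean_space \<Rightarrow> 'b \<Rightarrow> real"
  assumes X: "convex X" "x \<in> X" and c: "c \<ge> 0" and y0: "y0 \<in> Y"
    and wc: "\<And>y. y \<in> Y \<Longrightarrow> weakly_convex_on c X (\<lambda>u. g u y)"
    and wc': "\<And>y. y \<in> Y \<Longrightarrow> weakly_convex_on c X (\<lambda>u. g' u y)"
    and bdd': "\<And>u. u \<in> X \<Longrightarrow> bdd_above (g' u ` Y)"
    and close: "\<And>u y. u \<in> X \<Longrightarrow> y \<in> Y \<Longrightarrow> \<bar>g' u y - g u y\<bar> \<le> \<epsilon>"
    and L: "linear L" and minorant: "\<And>u. u \<in> X \<Longrightarrow> g x y0 + L (u - x) - c / 2 * (norm (u - x))\<^sup>2 \<le> g u y0"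
  shows "\<exists>G G'. GDERIV (moreau (primal g' Y) X (2 * c)) x :> G' \<and>
    GDERIV (moreau (primal g Y) X (2 * c)) x :> G \<and> norm (G' - G) \<le> sqrt (8 * c * \<epsilon>)"
proof (cases "c = 0")
  case True
  then show ?thesis using moreau_zero_gderiv by fastforce
next
  case False
  then have c: "c > 0" using c by simp
  have Y: "Y \<noteq> {}" using y0 by auto
  have bdd: "bdd_above (g u ` Y)" if u: "u \<in> X" for u
  proof -
    obtain B where "\<And>y. y \<in> Y \<Longrightarrow> g' u y \<le> B"
      using bdd'[OF u] by (auto simp: bdd_above_def)
    then have "\<And>y. y \<in> Y \<Longrightarrow> g u y \<le> B + \<epsilon>"
      using close[OF u] by (force simp: abs_le_iff)
    then show ?thesis by (auto simp: bdd_above_def)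
  qed
  have primal: "primal h Y = (\<lambda>u. SUP y\<in>Y. h u y)" for h :: "'a \<Rightarrow> 'b \<Rightarrow> real"
    by (simp add: primal_def fun_eq_iff)
  have "g x y0 + L (u - x) - c / 2 * (norm (u - x))\<^sup>2 \<le> primal g Y u" if u: "u \<in> X" for u
    using minorant[OF u] cSUP_upper[OF y0 bdd[OF u]] unfolding primal by linarith
  then have "bdd_below ((\<lambda>u. primal g Y u + c * (norm (u - x))\<^sup>2) ` X)"
    by (rule bdd_below_add_sq_dist[OF c L])
  moreover have "\<bar>primal g' Y u - primal g Y u\<bar> \<le> \<epsilon>" if "u \<in> X" for u
    unfolding primal using bdd[OF that] bdd'[OF that] close[OF that]
    by (intro abs_cSUP_diff_le[OF Y]) auto
  ultimately show ?thesis
    using moreau_gradients_close[OF X c] weakly_convex_on_SUP[OF Y wc bdd] weakly_convex_on_SUP[OF Y wc' bdd']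
    unfolding primal by blast
qed

lemma nonneg_coefficient_if_interior:
  fixes S :: "'a::euclidean_space set"
  assumes S: "interior S \<noteq> {}" and le: "\<And>p q. p \<in> S \<Longrightarrow> q \<in> S \<Longrightarrow> 0 \<le> C * norm (p - q)"
  shows "0 \<le> C"
proof -
  obtain p where p: "p \<in> S"
    using S interior_subset by blast
  have "\<not> S \<subseteq> {p}"
    using S interior_mono[of S "{p}"] by auto
  then obtain q where "q \<in> S" "q \<noteq> p" by blast
  then show ?thesis
    using le[OF _ p, of q] by (simp add: zero_le_mult_iff)
qed

lemma xydiff_lipschitz_nonneg:
  fixes f :: "'a::euclidean_space \<Rightarrow> 'b::euclidean_space \<Rightarrow> real"
  assumes X: "convex X" "interior X \<noteq> {}" and Y: "convex Y" "interior Y \<noteq> {}"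
    and ex: "ydiff_exists f X Y k" and exx: "xydiff_exists f X Y k" and y: "y \<in> Y"
    and lip: "\<And>x x'. x \<in> X \<Longrightarrow> x' \<in> X \<Longrightarrow>
      xynorm k (\<lambda>u vs. xydiff f X Y k x' y u vs - xydiff f X Y k x y u vs) \<le> L * norm (x' - x)"
  shows "0 \<le> L"
proof (rule nonneg_coefficient_if_interior[OF X(2)])
  fix p q assume "p \<in> X" "q \<in> X"
  then show "0 \<le> L * norm (p - q)"
    using xydiff_diff_bound(1)[OF X Y ex exx _ _ y, of q p] lip[of q p] by linarith
qed

lemma xydiff_lipschitz_weakly_convex:
  fixes f :: "'a::euclidean_space \<Rightarrow> 'b::euclidean_space \<Rightarrow> real" and v :: 'b
  assumes X: "convex X" "interior X \<noteq> {}" and Y: "convex Y" "interior Y \<noteq> {}"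
    and ex: "ydiff_exists f X Y k" and exx: "xydiff_exists f X Y k" and y: "y \<in> Y"
    and lip: "\<And>x x'. x \<in> X \<Longrightarrow> x' \<in> X \<Longrightarrow>
      xynorm k (\<lambda>u vs. xydiff f X Y k x' y u vs - xydiff f X Y k x y u vs) \<le> L * norm (x' - x)"
  defines "h \<equiv> \<lambda>z. ydiff f Y k z y (replicate k v)"
  shows "weakly_convex_on (L * norm v ^ k) X h" and "weakly_convex_on (L * norm v ^ k) X (\<lambda>z. - h z)"
    and "\<And>x u. x \<in> X \<Longrightarrow> u \<in> X \<Longrightarrow>
      h x + xydiff f X Y k x y (u - x) (replicate k v) - L * norm v ^ k / 2 * (norm (x - u))\<^sup>2 \<le> h u"
proof -
  have d: "\<And>z. z \<in> X \<Longrightarrow> (h has_derivative (\<lambda>u. xydiff f X Y k z y u (replicate k v))) (at z within X)"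
    using exx y unfolding h_def xydiff_def xydiff_exists_def by (simp add: frechet_derivative_works)
  have lip': "\<And>z1 z2 u. z1 \<in> X \<Longrightarrow> z2 \<in> X \<Longrightarrow>
      \<bar>xydiff f X Y k z1 y u (replicate k v) - xydiff f X Y k z2 y u (replicate k v)\<bar>
      \<le> L * norm v ^ k * norm (z1 - z2) * norm u"
  proof -
    fix z1 z2 u assume z: "z1 \<in> X" "z2 \<in> X"
    have "\<bar>xydiff f X Y k z1 y u (replicate k v) - xydiff f X Y k z2 y u (replicate k v)\<bar>
        \<le> xynorm k (\<lambda>u vs. xydiff f X Y k z1 y u vs - xydiff f X Y k z2 y u vs) * (norm u * norm v ^ k)"
      using xydiff_diff_bound(2)[OF X Y ex exx z(2,1) y] by (simp add: mult.assoc)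
    also have "\<dots> \<le> L * norm (z1 - z2) * (norm u * norm v ^ k)"
      using lip[OF z(2,1)] by (intro mult_right_mono) auto
    finally show "\<bar>xydiff f X Y k z1 y u (replicate k v) - xydiff f X Y k z2 y u (replicate k v)\<bar>
        \<le> L * norm v ^ k * norm (z1 - z2) * norm u"
      by (simp add: ac_simps)
  qed
  show "weakly_convex_on (L * norm v ^ k) X h"
    by (rule lipschitz_derivative_weakly_convex(1)[OF X(1) d lip'])
  show "weakly_convex_on (L * norm v ^ k) X (\<lambda>z. - h z)"
    by (rule lipschitz_derivative_weakly_convex(2)[OF X(1) d lip'])
  show "h x + xydiff f X Y k x y (u - x) (replicate k v) - L * norm v ^ k / 2 * (norm (x - u))\<^sup>2 \<le> h u"
    if "x \<in> X" "u \<in> X" for x u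
    by (rule lipschitz_derivative_weakly_convex(3)[OF X(1) d lip' that])
qed

section \<open>The Taylor model in \<open>y\<close>\<close>

lemma ydiff_has_real_derivative_along_segment:
  fixes f :: "'a \<Rightarrow> 'b::euclidean_space \<Rightarrow> real"
  assumes Y: "convex Y" and ex: "ydiff_exists f X Y k" and x: "x \<in> X" and yh: "yh \<in> Y" and y: "y \<in> Y"
    and j: "j < k" and t: "t \<in> {0..1}"
  shows "((\<lambda>t. ydiff f Y j x (yh + t *\<^sub>R (y - yh)) (replicate j (y - yh))) has_real_derivative
      ydiff f Y (Suc j) x (yh + t *\<^sub>R (y - yh)) (replicate (Suc j) (y - yh))) (at t within {0..1})"
proof -
  let ?z = "yh + t *\<^sub>R (y - yh)"
  have "(\<lambda>y'. ydiff f Y j x y' (replicate j (y - yh))) differentiable (at ?z within Y)"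
    using ex x convex_segment_point[OF Y yh y t] j unfolding ydiff_exists_def by auto
  then have "((\<lambda>y'. ydiff f Y j x y' (replicate j (y - yh))) has_derivative
      frechet_derivative (\<lambda>y'. ydiff f Y j x y' (replicate j (y - yh))) (at ?z within Y)) (at ?z within Y)"
    by (simp add: frechet_derivative_works)
  from has_real_derivative_along_segment[OF Y yh y t this] show ?thesis by simp
qed

lemma taylor_model_error:
  fixes f :: "'a \<Rightarrow> 'b::euclidean_space \<Rightarrow> real"
  assumes Y: "convex Y" "interior Y \<noteq> {}" and ex: "ydiff_exists f X Y k"
    and x: "x \<in> X" and yh: "yh \<in> Y" and y: "y \<in> Y"
    and lip: "\<And>y'. y' \<in> Y \<Longrightarrow> tnorm k (\<lambda>vs. ydiff f Y k x y' vs - ydiff f Y k x yh vs) \<le> \<rho> * norm (y' - yh)"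
  shows "\<bar>f x y - taylor_model f Y k yh x y\<bar> \<le> \<rho> * norm (y - yh) ^ Suc k / fact (Suc k)"
proof -
  define v where "v = y - yh"
  define Q where "Q = (\<lambda>j t. ydiff f Y j x (yh + t *\<^sub>R v) (replicate j v))"
  have dQ: "(Q j has_real_derivative Q (Suc j) t) (at t within {0..1})" if "j < k" "t \<in> {0..1}" for j t
    unfolding Q_def v_def using ydiff_has_real_derivative_along_segment[OF Y(1) ex x yh y that] .
  have hQ: "\<bar>Q k t - Q k 0\<bar> \<le> (\<rho> * norm v ^ Suc k) * t + 0" if t: "t \<in> {0..1}" for t
  proof -
    have z: "yh + t *\<^sub>R v \<in> Y"
      unfolding v_def using convex_segment_point[OF Y(1) yh y t] .
    let ?T = "\<lambda>vs. ydiff f Y k x (yh + t *\<^sub>R v) vs - ydiff f Y k x yh vs"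
    have "multilinear k ?T"
      using ydiff_multilinear[OF Y ex x _ order.refl] z yh by (intro multilinear_diff) auto
    then have "\<bar>?T (replicate k v)\<bar> \<le> tnorm k ?T * norm v ^ k"
      by (rule tnorm_nonneg_and_bound(2))
    also have "\<dots> \<le> (\<rho> * norm (t *\<^sub>R v)) * norm v ^ k"
      using lip[OF z] by (intro mult_right_mono) simp_all
    finally show ?thesis using t by (simp add: Q_def ac_simps)
  qed
  have "\<bar>Q 0 1 - (\<Sum>j\<le>k. Q j 0 * 1 ^ j / fact j)\<bar> \<le> (\<rho> * norm v ^ Suc k) * 1 ^ Suc k / fact (Suc k) + 0 * 1 ^ k / fact k"
    using taylor_remainder_bound_unit_interval[of k Q "\<rho> * norm v ^ Suc k" 0 1, OF dQ hQ] by simp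
  moreover have "Q 0 1 = f x y"
    by (simp add: Q_def v_def)
  moreover have "(\<Sum>j\<le>k. Q j 0 * 1 ^ j / fact j) = taylor_model f Y k yh x y"
    by (simp add: Q_def v_def taylor_model_def)
  ultimately show ?thesis
    by (simp add: v_def)
qed

lemma taylor_model_uniform_error:
  fixes f :: "'a \<Rightarrow> 'b::euclidean_space \<Rightarrow> real"
  assumes Y: "convex Y" "interior Y \<noteq> {}" and ex: "ydiff_exists f X Y k"
    and lip: "\<And>x y y'. x \<in> X \<Longrightarrow> y \<in> Y \<Longrightarrow> y' \<in> Y \<Longrightarrow>
      tnorm k (\<lambda>vs. ydiff f Y k x y' vs - ydiff f Y k x y vs) \<le> \<rho> * norm (y' - y)"
    and yh: "yh \<in> Y" and D: "\<And>y. y \<in> Y \<Longrightarrow> norm (y - yh) \<le> D"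
    and x: "x \<in> X" and y: "y \<in> Y"
  shows "\<bar>taylor_model f Y k yh x y - f x y\<bar> \<le> \<rho> * D ^ (k + 1) / fact (k + 1)"
proof -
  have "0 \<le> \<rho>"
  proof (rule nonneg_coefficient_if_interior[OF Y(2)])
    fix p q assume "p \<in> Y" "q \<in> Y"
    then have "0 \<le> tnorm k (\<lambda>vs. ydiff f Y k x p vs - ydiff f Y k x q vs)"
      using ydiff_multilinear[OF Y ex x _ order.refl] by (intro tnorm_nonneg_and_bound(1) multilinear_diff) auto
    then show "0 \<le> \<rho> * norm (p - q)"
      using lip[OF x \<open>q \<in> Y\<close> \<open>p \<in> Y\<close>] by linarith
  qed
  moreover have "norm (y - yh) ^ Suc k \<le> D ^ Suc k"
    using D[OF y] by (intro power_mono) auto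
  ultimately have "\<rho> * norm (y - yh) ^ Suc k / fact (Suc k) \<le> \<rho> * D ^ Suc k / fact (Suc k)"
    by (intro divide_right_mono mult_left_mono) auto
  then show ?thesis
    using taylor_model_error[OF Y ex x yh y lip[OF x yh]] by (simp add: abs_minus_commute)
qed

lemma taylor_model_bdd_above:
  fixes f :: "'a \<Rightarrow> 'b::euclidean_space \<Rightarrow> real"
  assumes Y: "convex Y" "interior Y \<noteq> {}" and ex: "ydiff_exists f X Y k"
    and x: "x \<in> X" and yh: "yh \<in> Y" and D: "\<And>y. y \<in> Y \<Longrightarrow> norm (y - yh) \<le> D"
  shows "bdd_above (taylor_model f Y k yh x ` Y)"
proof -
  have "taylor_model f Y k yh x y \<le> (\<Sum>j\<le>k. tnorm j (ydiff f Y j x yh) * D ^ j / fact j)" if y: "y \<in> Y" for y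
  proof -
    have "taylor_model f Y k yh x y \<le> (\<Sum>j\<le>k. \<bar>ydiff f Y j x yh (replicate j (y - yh)) / fact j\<bar>)"
      unfolding taylor_model_def by (rule order_trans[OF abs_ge_self sum_abs])
    also have "\<dots> \<le> (\<Sum>j\<le>k. tnorm j (ydiff f Y j x yh) * D ^ j / fact j)"
    proof (rule sum_mono)
      fix j assume "j \<in> {..k}"
      then have ml: "multilinear j (ydiff f Y j x yh)"
        using ydiff_multilinear[OF Y ex x yh] by simp
      have "\<bar>ydiff f Y j x yh (replicate j (y - yh))\<bar> \<le> tnorm j (ydiff f Y j x yh) * D ^ j"
        using tnorm_nonneg_and_bound[OF ml] D[OF y]
        by (meson norm_ge_zero order_trans mult_left_mono power_mono)
      then show "\<bar>ydiff f Y j x yh (replicate j (y - yh)) / fact j\<bar> \<le> tnorm j (ydiff f Y j x yh) * D ^ j / fact j"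
        by (simp add: divide_right_mono)
    qed
    finally show ?thesis .
  qed
  then show ?thesis by (auto simp: bdd_above_def)
qed

lemma abs_convexity_gap_le:
  assumes "weakly_convex_on c S h" "weakly_convex_on c S (\<lambda>z. - h z)"
    and "a \<in> S" "b \<in> S" "0 \<le> t" "t \<le> 1"
  shows "\<bar>(1 - t) * h a + t * h b - h ((1 - t) *\<^sub>R a + t *\<^sub>R b)\<bar> \<le> c / 2 * t * (1 - t) * (norm (a - b))\<^sup>2"
  using weakly_convex_onD[OF assms(1,3-6)] weakly_convex_onD[OF assms(2,3-6)] unfolding abs_le_iff by simp

text \<open>The convexity gaps in \<open>x\<close> of \<open>\<nabla>\<^sup>j\<^sub>y f(\<cdot>, yh + t v)[v\<^sup>j]\<close> form a Taylor chain in \<open>t\<close>, whose top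
  member is small because the \<open>k\<close>-th derivative has a \<open>\<tau>\<close>-Lipschitz \<open>x\<close>-gradient; at \<open>t = 1\<close> the
  chain compares the gap of \<open>f\<close> with that of its Taylor model.\<close>

lemma taylor_model_convexity_gap:
  fixes f :: "'a::euclidean_space \<Rightarrow> 'b::euclidean_space \<Rightarrow> real"
  assumes X: "convex X" "interior X \<noteq> {}" and Y: "convex Y" "interior Y \<noteq> {}"
    and ex: "ydiff_exists f X Y k" and exx: "xydiff_exists f X Y k"
    and lip: "\<And>x x' y. x \<in> X \<Longrightarrow> x' \<in> X \<Longrightarrow> y \<in> Y \<Longrightarrow>
      xynorm k (\<lambda>u vs. xydiff f X Y k x' y u vs - xydiff f X Y k x y u vs) \<le> \<tau> * norm (x' - x)"
    and yh: "yh \<in> Y" and y: "y \<in> Y" and a: "a \<in> X" and b: "b \<in> X" and s: "0 \<le> s" "s \<le> 1"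
  defines "m \<equiv> (1 - s) *\<^sub>R a + s *\<^sub>R b" and "T \<equiv> taylor_model f Y k yh"
  shows "\<bar>((1 - s) * f a y + s * f b y - f m y) - ((1 - s) * T a y + s * T b y - T m y)\<bar>
    \<le> \<tau> * norm (y - yh) ^ k * (s * (1 - s) * (norm (a - b))\<^sup>2) / fact k"
proof -
  define v where "v = y - yh"
  define W where "W = s * (1 - s) * (norm (a - b))\<^sup>2"
  define q where "q = (\<lambda>z j t. ydiff f Y j z (yh + t *\<^sub>R v) (replicate j v))"
  define Q where "Q = (\<lambda>j t. (1 - s) * q a j t + s * q b j t - q m j t)"
  have dQ: "(Q j has_real_derivative Q (Suc j) t) (at t within {0..1})" if j: "j < k" "t \<in> {0..1}" for j t
  proof -
    have "(q z j has_real_derivative q z (Suc j) t) (at t within {0..1})" if "z \<in> X" for z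
      unfolding q_def v_def using ydiff_has_real_derivative_along_segment[OF Y(1) ex that yh y j] .
    then show ?thesis
      unfolding Q_def using a b convexD_alt[OF X(1) a b s] by (intro DERIV_diff DERIV_add DERIV_cmult) (auto simp: m_def)
  qed
  have gap: "\<bar>Q k t\<bar> \<le> \<tau> * norm v ^ k / 2 * W" if t: "t \<in> {0..1}" for t
  proof -
    have "yh + t *\<^sub>R v \<in> Y"
      unfolding v_def using convex_segment_point[OF Y(1) yh y t] .
    note two_sided = xydiff_lipschitz_weakly_convex(1,2)[OF X Y ex exx this lip[OF _ _ this], of v]
    show ?thesis
      using abs_convexity_gap_le[OF two_sided a b s] by (simp add: Q_def q_def m_def W_def mult.assoc)
  qed
  have "\<bar>Q 0 1 - (\<Sum>j\<le>k. Q j 0 * 1 ^ j / fact j)\<bar> \<le> 0 * 1 ^ Suc k / fact (Suc k) + \<tau> * norm v ^ k * W * 1 ^ k / fact k"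
  proof (rule taylor_remainder_bound_unit_interval[of k Q 0 "\<tau> * norm v ^ k * W" 1, OF dQ])
    show "\<bar>Q k t - Q k 0\<bar> \<le> 0 * t + \<tau> * norm v ^ k * W" if "t \<in> {0..1}" for t
      using gap[OF that] gap[of 0] unfolding abs_le_iff by simp
  qed auto
  moreover have "Q 0 1 = (1 - s) * f a y + s * f b y - f m y"
    by (simp add: Q_def q_def v_def)
  moreover have "(\<Sum>j\<le>k. Q j 0 * 1 ^ j / fact j) = (1 - s) * T a y + s * T b y - T m y"
    by (simp add: Q_def q_def v_def T_def taylor_model_def sum_subtractf sum.distrib sum_distrib_left
        diff_divide_distrib add_divide_distrib)
  ultimately show ?thesis by (simp add: v_def W_def)
qed

lemma taylor_model_weakly_convex:
  fixes f :: "'a::euclidean_space \<Rightarrow> 'b::euclidean_space \<Rightarrow> real"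
  assumes X: "convex X" "interior X \<noteq> {}" and Y: "convex Y" "interior Y \<noteq> {}"
    and ex: "ydiff_exists f X Y k" and exx: "xydiff_exists f X Y k"
    and lip: "\<And>x x' y. x \<in> X \<Longrightarrow> x' \<in> X \<Longrightarrow> y \<in> Y \<Longrightarrow>
      xynorm k (\<lambda>u vs. xydiff f X Y k x' y u vs - xydiff f X Y k x y u vs) \<le> \<tau> * norm (x' - x)"
    and \<tau>: "0 \<le> \<tau>" and yh: "yh \<in> Y" and y: "y \<in> Y" and D: "norm (y - yh) \<le> D"
    and wc: "weakly_convex_on lam X (\<lambda>x. f x y)"
  shows "weakly_convex_on (lam + 2 * \<tau> * D ^ k / fact k) X (\<lambda>x. taylor_model f Y k yh x y)"
  unfolding weakly_convex_on_def
proof (intro ballI)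
  fix a b and s :: real assume a: "a \<in> X" and b: "b \<in> X" and s: "s \<in> {0..1}"
  define W where "W = s * (1 - s) * (norm (a - b))\<^sup>2"
  have "\<tau> * norm (y - yh) ^ k * W / fact k \<le> \<tau> * D ^ k * W / fact k"
    using \<tau> s D by (auto simp: W_def intro!: divide_right_mono mult_right_mono mult_left_mono power_mono)
  moreover have "f ((1 - s) *\<^sub>R a + s *\<^sub>R b) y \<le> (1 - s) * f a y + s * f b y + lam / 2 * W"
    using weakly_convex_onD[OF wc a b, of s] s by (simp add: W_def mult.assoc)
  moreover have eq: "(lam + 2 * \<tau> * D ^ k / fact k) / 2 * s * (1 - s) * (norm (a - b))\<^sup>2 =
      lam / 2 * W + \<tau> * D ^ k * W / fact k"
    by (simp add: W_def field_simps)
  ultimately show "taylor_model f Y k yh ((1 - s) *\<^sub>R a + s *\<^sub>R b) y \<le> (1 - s) * taylor_model f Y k yh a y +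
      s * taylor_model f Y k yh b y + (lam + 2 * \<tau> * D ^ k / fact k) / 2 * s * (1 - s) * (norm (a - b))\<^sup>2"
    using taylor_model_convexity_gap[OF X Y ex exx lip yh y a b, of s] s
    unfolding eq abs_le_iff W_def by simp
qed

lemma partial_gradient_lipschitz_weakly_convex:
  fixes f :: "'a::euclidean_space \<Rightarrow> 'b::euclidean_space \<Rightarrow> real"
  assumes X: "convex X" "interior X \<noteq> {}" and Y: "convex Y" "interior Y \<noteq> {}"
    and ex: "xydiff_exists f X Y 0"
    and lip: "\<And>x x' y. x \<in> X \<Longrightarrow> x' \<in> X \<Longrightarrow> y \<in> Y \<Longrightarrow>
      xynorm 0 (\<lambda>u vs. xydiff f X Y 0 x' y u vs - xydiff f X Y 0 x y u vs) \<le> lam * norm (x' - x)"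
    and y: "y \<in> Y"
  shows "0 \<le> lam" and "weakly_convex_on lam X (\<lambda>x. f x y)"
    and "\<And>x u. x \<in> X \<Longrightarrow> u \<in> X \<Longrightarrow>
      f x y + xydiff f X Y 0 x y (u - x) [] - lam / 2 * (norm (u - x))\<^sup>2 \<le> f u y"
proof -
  have ex0: "ydiff_exists f X Y 0"
    by (simp add: ydiff_exists_def)
  show "0 \<le> lam"
    by (rule xydiff_lipschitz_nonneg[OF X Y ex0 ex y lip[OF _ _ y]])
  show "weakly_convex_on lam X (\<lambda>x. f x y)"
    using xydiff_lipschitz_weakly_convex(1)[OF X Y ex0 ex y lip[OF _ _ y], where v = 0] by simp
  show "f x y + xydiff f X Y 0 x y (u - x) [] - lam / 2 * (norm (u - x))\<^sup>2 \<le> f u y" if "x \<in> X" "u \<in> X" for x u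
    using xydiff_lipschitz_weakly_convex(3)[OF X Y ex0 ex y lip[OF _ _ y] that, where v = 0]
    by (simp add: norm_minus_commute)
qed

lemma coupling_weakly_convex:
  fixes f :: "'a::euclidean_space \<Rightarrow> 'b::euclidean_space \<Rightarrow> real"
  assumes X: "convex X" "interior X \<noteq> {}" and Y: "convex Y" "interior Y \<noteq> {}"
    and yh: "yh \<in> Y" and D: "\<And>y. y \<in> Y \<Longrightarrow> norm (y - yh) \<le> D"
    and gx_ex: "xydiff_exists f X Y 0"
    and gx_lip: "\<And>x x' y. x \<in> X \<Longrightarrow> x' \<in> X \<Longrightarrow> y \<in> Y \<Longrightarrow>
      xynorm 0 (\<lambda>u vs. xydiff f X Y 0 x' y u vs - xydiff f X Y 0 x y u vs) \<le> lam * norm (x' - x)"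
    and yk_ex: "ydiff_exists f X Y k"
    and xk: "k \<ge> 1 \<Longrightarrow> xydiff_exists f X Y k \<and> (\<forall>x\<in>X. \<forall>x'\<in>X. \<forall>y\<in>Y.
      xynorm k (\<lambda>u vs. xydiff f X Y k x' y u vs - xydiff f X Y k x y u vs) \<le> \<tau> * norm (x' - x))"
  defines "lbar \<equiv> lam + (if k \<ge> 1 then 2 * \<tau> * D ^ k / fact k else 0)"
  shows "lam \<le> lbar" and "0 \<le> lbar"
    and "\<And>y. y \<in> Y \<Longrightarrow> weakly_convex_on lbar X (\<lambda>x. f x y)"
    and "\<And>y. y \<in> Y \<Longrightarrow> weakly_convex_on lbar X (\<lambda>x. taylor_model f Y k yh x y)"
proof -
  have lam: "0 \<le> lam" and f_wc: "\<And>y. y \<in> Y \<Longrightarrow> weakly_convex_on lam X (\<lambda>x. f x y)"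
    using partial_gradient_lipschitz_weakly_convex(1,2)[OF X Y gx_ex gx_lip] yh by blast+
  have xy_ex: "xydiff_exists f X Y k"
    and xy_lip: "\<And>x x' y. x \<in> X \<Longrightarrow> x' \<in> X \<Longrightarrow> y \<in> Y \<Longrightarrow>
      xynorm k (\<lambda>u vs. xydiff f X Y k x' y u vs - xydiff f X Y k x y u vs) \<le> \<tau> * norm (x' - x)"
    if "k \<ge> 1"
    using xk[OF that] by blast+
  have \<tau>: "0 \<le> \<tau>" if "k \<ge> 1"
    using xydiff_lipschitz_nonneg[OF X Y yk_ex xy_ex[OF that] yh xy_lip[OF that _ _ yh]] .
  show lbar: "lam \<le> lbar" "0 \<le> lbar"
    using lam \<tau> D[OF yh] by (auto simp: lbar_def)
  show "weakly_convex_on lbar X (\<lambda>x. f x y)" if "y \<in> Y" for y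
    using weakly_convex_on_mono[OF f_wc[OF that] lbar(1)] .
  show "weakly_convex_on lbar X (\<lambda>x. taylor_model f Y k yh x y)" if y: "y \<in> Y" for y
  proof (cases "k \<ge> 1")
    case True
    have "weakly_convex_on (lam + 2 * \<tau> * D ^ k / fact k) X (\<lambda>x. taylor_model f Y k yh x y)"
      by (rule taylor_model_weakly_convex[OF X Y yk_ex xy_ex[OF True] _ \<tau>[OF True] yh y D[OF y] f_wc[OF y]])
        (rule xy_lip[OF True])
    then show ?thesis
      using True by (simp add: lbar_def)
  next
    case False
    then have "k = 0" by simp
    then show ?thesis
      using f_wc[OF yh] by (simp add: lbar_def taylor_model_def)
  qed
qed

lemma coupling_moreau_gradients_close:
  fixes f :: "'a::euclidean_space \<Rightarrow> 'b::euclidean_space \<Rightarrow> real"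
  assumes X: "convex X" "interior X \<noteq> {}" and Y: "convex Y" "interior Y \<noteq> {}"
    and yh: "yh \<in> Y" and D: "\<And>y. y \<in> Y \<Longrightarrow> norm (y - yh) \<le> D"
    and gx_ex: "xydiff_exists f X Y 0"
    and gx_lip: "\<And>x x' y. x \<in> X \<Longrightarrow> x' \<in> X \<Longrightarrow> y \<in> Y \<Longrightarrow>
      xynorm 0 (\<lambda>u vs. xydiff f X Y 0 x' y u vs - xydiff f X Y 0 x y u vs) \<le> lam * norm (x' - x)"
    and yk_ex: "ydiff_exists f X Y k"
    and yk_lip: "\<And>x y y'. x \<in> X \<Longrightarrow> y \<in> Y \<Longrightarrow> y' \<in> Y \<Longrightarrow>
      tnorm k (\<lambda>vs. ydiff f Y k x y' vs - ydiff f Y k x y vs) \<le> \<rho> * norm (y' - y)"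
    and xk: "k \<ge> 1 \<Longrightarrow> xydiff_exists f X Y k \<and> (\<forall>x\<in>X. \<forall>x'\<in>X. \<forall>y\<in>Y.
      xynorm k (\<lambda>u vs. xydiff f X Y k x' y u vs - xydiff f X Y k x y u vs) \<le> \<tau> * norm (x' - x))"
    and x: "x \<in> X"
  defines "lbar \<equiv> lam + (if k \<ge> 1 then 2 * \<tau> * D ^ k / fact k else 0)"
  shows "\<exists>g gh. GDERIV (moreau (primal (taylor_model f Y k yh) Y) X (2 * lbar)) x :> gh \<and>
    GDERIV (moreau (primal f Y) X (2 * lbar)) x :> g \<and>
    norm (gh - g) \<le> sqrt (8 * lbar * \<rho> * D ^ (k + 1) / fact (k + 1))"
proof -
  note wc = coupling_weakly_convex[OF X Y yh D gx_ex gx_lip yk_ex xk, folded lbar_def]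
  have "\<exists>g gh. GDERIV (moreau (primal (taylor_model f Y k yh) Y) X (2 * lbar)) x :> gh \<and>
      GDERIV (moreau (primal f Y) X (2 * lbar)) x :> g \<and>
      norm (gh - g) \<le> sqrt (8 * lbar * (\<rho> * D ^ (k + 1) / fact (k + 1)))"
  proof (rule primal_moreau_gradients_close[OF X(1) x wc(2) yh wc(3,4)])
    show "bdd_above (taylor_model f Y k yh u ` Y)" if "u \<in> X" for u
      by (rule taylor_model_bdd_above[OF Y yk_ex that yh D])
    show "\<bar>taylor_model f Y k yh u y - f u y\<bar> \<le> \<rho> * D ^ (k + 1) / fact (k + 1)" if "u \<in> X" "y \<in> Y" for u y
      by (rule taylor_model_uniform_error[OF Y yk_ex yk_lip yh D that])
    show "linear (\<lambda>w. xydiff f X Y 0 x yh w [])"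
      using xydiff_linear[OF gx_ex x yh] by simp
    show "f x yh + xydiff f X Y 0 x yh (u - x) [] - lbar / 2 * (norm (u - x))\<^sup>2 \<le> f u yh" if "u \<in> X" for u
      using partial_gradient_lipschitz_weakly_convex(3)[OF X Y gx_ex gx_lip yh x that]
        mult_right_mono[OF wc(1), of "(norm (u - x))\<^sup>2"]
      by simp
  qed
  then show ?thesis by (simp only: times_divide_eq_right mult.assoc)
qed

theorem proposition1:
  fixes f :: "'a::euclidean_space \<Rightarrow> 'b::euclidean_space \<Rightarrow> real"
    and X :: "'a set" and Y :: "'b set"
    and k :: nat and yh :: 'b
    and D lam \<rho> \<sigma> \<tau> :: real and \<mu> :: ereal
  assumes X: "convex X" "interior X \<noteq> {}"
    and Y: "convex Y" "interior Y \<noteq> {}" "compact Y"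
    and D: "diameter Y \<le> D"
    and yh: "yh \<in> Y"
    (* (i) *)
    and gx_ex: "xydiff_exists f X Y 0"
    and gx_lip: "\<forall>x\<in>X. \<forall>x'\<in>X. \<forall>y\<in>Y. \<forall>y'\<in>Y.
        ereal (xynorm 0 (\<lambda>u vs. xydiff f X Y 0 x' y' u vs - xydiff f X Y 0 x y u vs))
          \<le> ereal (lam * norm (x' - x)) + \<mu> * ereal (norm (y' - y))"
    (* (ii) *)
    and yk_ex: "ydiff_exists f X Y k"
    and yk_lip: "\<forall>x\<in>X. \<forall>x'\<in>X. \<forall>y\<in>Y. \<forall>y'\<in>Y.
        tnorm k (\<lambda>vs. ydiff f Y k x' y' vs - ydiff f Y k x y vs)
          \<le> \<rho> * norm (y' - y) + \<sigma> * norm (x' - x)"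
    and yk_ac: "\<forall>y\<in>Y. abs_cont_tensor k X (\<lambda>x vs. ydiff f Y k x y vs)"
    (* (iii) *)
    and iii: "k \<ge> 1 \<Longrightarrow>
        xydiff_exists f X Y k \<and>
        (\<forall>x\<in>X. \<forall>x'\<in>X. \<forall>y\<in>Y.
           xynorm k (\<lambda>u vs. xydiff f X Y k x' y u vs - xydiff f X Y k x y u vs)
             \<le> \<tau> * norm (x' - x)) \<and>
        {(x, y). x \<in> X \<and> y \<in> Ybad f X Y k x} \<in> sets lebesgue \<and>
        (\<forall>x\<in>X. \<forall>y\<in>Y. \<forall>\<epsilon>>0. \<exists>\<delta>>0. \<forall>y'\<in>Y. dist y' y < \<delta> \<longrightarrow>
           tnorm k (\<lambda>vs. ydiff f Y k x y' vs - ydiff f Y k x y vs) < \<epsilon>)"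
  shows "\<forall>x\<in>X.
    (let lbar = lam + (if k \<ge> 1 then 2 * \<tau> * D ^ k / fact k else 0) in
     \<exists>g gh.
       GDERIV (moreau (primal (taylor_model f Y k yh) Y) X (2 * lbar)) x :> gh \<and>
       GDERIV (moreau (primal f Y) X (2 * lbar)) x :> g \<and>
       norm (gh - g) \<le> sqrt (8 * lbar * \<rho> * D ^ (k + 1) / fact (k + 1)))"
proof -
  have D_bound: "norm (y - yh) \<le> D" if "y \<in> Y" for y
    using diameter_bounded_bound[OF compact_imp_bounded[OF Y(3)] that yh] D by (simp add: dist_norm)
  have grad_lip: "xynorm 0 (\<lambda>u vs. xydiff f X Y 0 x' y u vs - xydiff f X Y 0 x y u vs) \<le> lam * norm (x' - x)"
    if "x \<in> X" "x' \<in> X" "y \<in> Y" for x x' y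
    using gx_lip[rule_format, OF that(1,2,3,3)] by (simp add: zero_ereal_def[symmetric])
  have y_lip: "tnorm k (\<lambda>vs. ydiff f Y k x y' vs - ydiff f Y k x y vs) \<le> \<rho> * norm (y' - y)"
    if "x \<in> X" "y \<in> Y" "y' \<in> Y" for x y y'
    using yk_lip[rule_format, OF that(1,1,2,3)] by simp
  have "k \<ge> 1 \<Longrightarrow> xydiff_exists f X Y k \<and> (\<forall>x\<in>X. \<forall>x'\<in>X. \<forall>y\<in>Y.
      xynorm k (\<lambda>u vs. xydiff f X Y k x' y u vs - xydiff f X Y k x y u vs) \<le> \<tau> * norm (x' - x))"
    using iii by blast
  from coupling_moreau_gradients_close[OF X Y(1,2) yh D_bound gx_ex grad_lip yk_ex y_lip this]
  show ?thesis
    unfolding Let_def by blast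
qed

end
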